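(* Let $(M_i)_{i\in\omega}$ be a sequence with $\emptyset\ne M_i\subseteq\omega^{B_i}$, where each $B_i$ is a nonempty finite set, each $M_i$ is an upper set, and $0\notin M_i$ for all $i$. Let $(T_i)_{i\in\omega}$ and $(T'_i)_{i\in\omega}$ be the uniform and geometric thresholds of $(M_i)_{i\in\omega}$, respectively. If both $\#B_i\to\infty$ and $T'_i\to\infty$ as $i\to\infty$, then $T_i/T'_i\to1$ as $i\to\infty$.
   Context: $\omega$ denotes the set of nonnegative integers and $\omega^B$ the set of functions $B\to\omega$, ordered pointwise; $0$ is the zero function. $M$ is an upper set if $f\in M$, $f\le g$ imply $g\in M$. For $T\in\omega$, $\mu_T$ is the probability measure on $\omega^B$ uniform on $\{f:\sum_{b\in B}f(b)=T\}$ and zero elsewhere. The geometric distribution on $\omega$ with parameter $0<p\le1$ assigns probability $p(1-p)^k$ to $k$. For $T\in\mathbb{R}_{\ge0}$, $\nu_T$ is the product of $\#B$ copies of the geometric distribution with parameter $(1+T/\#B)^{-1}$. The uniform threshold of $(M_i)$ is the sequence $(T_i)$ where $T_i\in\omega$ is minimal with $\mu_{T_i}(M_i)\ge\tfrac12$; the geometric threshold is the sequence $(T'_i)$ where $T'_i$ is the unique positive real with $\nu_{T'_i}(M_i)=\tfrac12$. *)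

theory Defs
  imports "HOL-Probability.Probability"
begin

text \<open>Functions \<open>B \<rightarrow> \<omega>\<close> are represented extensionally as elements of
  \<open>B \<rightarrow>\<^sub>E (UNIV::nat set)\<close> (value \<open>undefined\<close> outside \<open>B\<close>).\<close>

definition zero_fun :: "'b set \<Rightarrow> ('b \<Rightarrow> nat)" where
  "zero_fun B = (\<lambda>b\<in>B. 0)"

definition upper_set :: "'b set \<Rightarrow> ('b \<Rightarrow> nat) set \<Rightarrow> bool" where
  "upper_set B M \<longleftrightarrow> (\<forall>f\<in>M. \<forall>g \<in> B \<rightarrow>\<^sub>E (UNIV::nat set).
      (\<forall>b\<in>B. f b \<le> g b) \<longrightarrow> g \<in> M)"

definition level :: "'b set \<Rightarrow> nat \<Rightarrow> ('b \<Rightarrow> nat) set" where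
  "level B T = {f \<in> B \<rightarrow>\<^sub>E (UNIV::nat set). (\<Sum>b\<in>B. f b) = T}"

definition mu :: "'b set \<Rightarrow> nat \<Rightarrow> ('b \<Rightarrow> nat) pmf" where
  "mu B T = pmf_of_set (level B T)"

definition nu :: "'b set \<Rightarrow> real \<Rightarrow> ('b \<Rightarrow> nat) pmf" where
  "nu B T = Pi_pmf B undefined (\<lambda>_. geometric_pmf (1 / (1 + T / real (card B))))"

definition uniform_threshold :: "'b set \<Rightarrow> ('b \<Rightarrow> nat) set \<Rightarrow> nat" where
  "uniform_threshold B M = (LEAST T. measure_pmf.prob (mu B T) M \<ge> 1/2)"

definition geometric_threshold :: "'b set \<Rightarrow> ('b \<Rightarrow> nat) set \<Rightarrow> real" where
  "geometric_threshold B M = (THE T. T > 0 \<and> measure_pmf.prob (nu B T) M = 1/2)"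

end

theory Submission
  imports Defs
begin

text \<open>Write \<open>|f|\<close> for the total of \<open>f\<close>. Under \<open>\<nu>\<^sub>t\<close> the total is negative binomial and, given
  \<open>|f| = s\<close>, the point \<open>f\<close> is uniform on the \<open>s\<close>-th level; so \<open>\<nu>\<^sub>t(M)\<close> is a mixture of the
  \<open>\<mu>\<^sub>s(M)\<close> whose weights concentrate, by Chebyshev, on \<open>s = (1 \<plusminus> \<epsilon>) t\<close> once \<open>t\<close> and \<open>#B\<close> are
  large. Double counting shows that \<open>\<mu>\<^sub>s(M)\<close> is nondecreasing in \<open>s\<close>. An Efron--Stein type
  inequality for upper sets, proved one coordinate at a time, shows that the odds
  \<open>\<nu>\<^sub>t(M) / (1 - \<nu>\<^sub>t(M))\<close> grow at least linearly in \<open>t\<close>; hence \<open>\<nu>\<^sub>t(M)\<close> is bounded away from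
  \<open>1/2\<close> at \<open>t = (1 \<plusminus> \<epsilon>) T'\<close>, and \<open>\<mu>\<^sub>s(M)\<close> must cross \<open>1/2\<close> between \<open>T' / (1 + \<epsilon>)\<^sup>2\<close> and
  \<open>(1 + \<epsilon>)\<^sup>2 T'\<close>.\<close>

section \<open>Second moment of the negative binomial distribution\<close>

lemma power_times_square_sums:
  fixes c :: real assumes c: "\<bar>c\<bar> < 1"
  shows "(\<lambda>n. c^n * (real n)^2) sums (c*(1+c)/(1-c)^3)"
proof -
  have times_n: "(\<lambda>n. real n * z^n) sums (z/(1-z)^2)" if "norm z < 1" for z :: real
    using geometric_sums_times_n[of z] that by (simp add: mult.commute)
  have deriv: "((\<lambda>z. z/(1-z)^2) has_field_derivative ((1+c)/(1-c)^3)) (at c)"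
  proof -
    have "((\<lambda>z. z/(1-z)^2) has_field_derivative ((1*(1-c)^2 - c*(2*(1-c)*(-1))) / ((1-c)^2)^2)) (at c)"
      using c by (auto intro!: derivative_eq_intros)
    moreover have "(1*(1-c)^2 - c*(2*(1-c)*(-1))) / ((1-c)^2)^2 = (1+c)/(1-c)^3"
    proof -
      have "1 - c \<noteq> 0" using c by auto
      moreover have "(1*(1-c)^2 - c*(2*(1-c)*(-1))) = (1-c)*(1+c)"
        by (simp add: algebra_simps power2_eq_square)
      moreover have "((1-c)^2)^2 = (1-c)*(1-c)^3" by (simp add: power2_eq_square power3_eq_cube)
      ultimately show ?thesis by simp
    qed
    ultimately show ?thesis by simp
  qed
  have "(\<lambda>n. diffs (\<lambda>n. real n) n * c ^ n) sums ((1+c)/(1-c)^3)"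
    by (rule termdiffs_sums_strong[OF times_n deriv, of 1]) (use c in auto)
  hence "(\<lambda>n. c * ((real (Suc n))^2 * c ^ n)) sums (c * ((1+c)/(1-c)^3))"
    unfolding diffs_def by (intro sums_mult) (simp add: power2_eq_square)
  hence "(\<lambda>n. c^(Suc n) * (real (Suc n))^2) sums (c*(1+c)/(1-c)^3)"
    by (simp add: algebra_simps)
  thus ?thesis by (subst (asm) sums_Suc_iff) simp
qed

lemma nn_integral_geometric_pmf_square:
  assumes p: "p \<in> {0<..1}"
  shows "(\<integral>\<^sup>+k. ennreal ((real k)^2) \<partial>geometric_pmf p) = ennreal ((1-p)*(2-p)/p^2)"
proof -
  have "(\<lambda>n. p * ((1-p)^n * (real n)^2)) sums (p * ((1-p)*(1+(1-p))/(1-(1-p))^3))"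
    using p by (intro sums_mult power_times_square_sums) auto
  moreover have "p * ((1-p)*(1+(1-p))/(1-(1-p))^3) = (1-p)*(2-p)/p^2"
    using p by (simp add: field_simps power2_eq_square power3_eq_cube)
  ultimately have sums: "(\<lambda>n. (1-p)^n * p * (real n)^2) sums ((1-p)*(2-p)/p^2)"
    by (simp add: mult_ac)
  have "(\<integral>\<^sup>+k. ennreal ((real k)^2) \<partial>geometric_pmf p) =
        (\<integral>\<^sup>+k. ennreal (pmf (geometric_pmf p) k * (real k)^2) \<partial>count_space UNIV)"
    by (simp add: nn_integral_measure_pmf ennreal_mult')
  also have "\<dots> = (\<Sum>k. ennreal ((1-p)^k * p * (real k)^2))"
    using p by (simp add: nn_integral_count_space_nat)
  also have "\<dots> = ennreal ((1-p)*(2-p)/p^2)"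
    using sums p by (subst suminf_ennreal2) (auto simp: sums_iff)
  finally show ?thesis .
qed

lemma nn_integral_neg_binomial_pmf_square:
  assumes p: "p \<in> {0<..1}"
  shows "(\<integral>\<^sup>+k. ennreal ((real k)^2) \<partial>neg_binomial_pmf n p)
           = ennreal (real n*(1-p)/p^2 + (real n*(1-p)/p)^2)"
proof (induction n)
  case 0
  then show ?case by simp
next
  case (Suc n)
  have mean_geom: "(\<integral>\<^sup>+k. ennreal (real k) \<partial>geometric_pmf p) = ennreal ((1-p)/p)"
    using nn_integral_eq_integral[OF integrable_real_geometric_pmf[OF p]]
      expectation_geometric_pmf[OF p] by simp
  have mean_nb: "(\<integral>\<^sup>+k. ennreal (real k) \<partial>neg_binomial_pmf n p) = ennreal (real n*(1-p)/p)"
    using nn_integral_neg_binomial_pmf_real[OF p, of n]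
    by (simp add: ennreal_of_nat_eq_real_of_nat[abs_def])
  have ennreal_expand: "ennreal a + 2 * ennreal b * ennreal c + ennreal d = ennreal (a + 2*b*c + d)"
    if "a \<ge> 0" "b \<ge> 0" "c \<ge> 0" "d \<ge> 0" for a b c d :: real
  proof -
    have "2 * ennreal b * ennreal c = ennreal (2*b*c)"
      using that by (simp add: ennreal_mult)
    thus ?thesis using that by (simp add: ennreal_plus)
  qed
  have square: "ennreal ((real x + real y)^2)
      = ennreal ((real x)^2) + 2 * ennreal (real x) * ennreal (real y) + ennreal ((real y)^2)"
    for x y :: nat
    by (subst ennreal_expand) (auto simp: power2_eq_square algebra_simps)
  have "(\<integral>\<^sup>+k. ennreal ((real k)^2) \<partial>neg_binomial_pmf (Suc n) p) =
     (\<integral>\<^sup>+x. \<integral>\<^sup>+y. ennreal ((real x)^2) + 2 * ennreal (real x) * ennreal (real y)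
        + ennreal ((real y)^2) \<partial>neg_binomial_pmf n p \<partial>geometric_pmf p)"
    by (simp add: neg_binomial_pmf_Suc case_prod_unfold nn_integral_pair_pmf' square)
  also have "\<dots> = (\<integral>\<^sup>+x. ennreal ((real x)^2) + 2 * ennreal (real x) * ennreal (real n*(1-p)/p)
        + ennreal (real n*(1-p)/p^2 + (real n*(1-p)/p)^2) \<partial>geometric_pmf p)"
    by (simp add: nn_integral_add nn_integral_cmult Suc.IH mean_nb measure_pmf.emeasure_space_1)
  also have "\<dots> = ennreal ((1-p)*(2-p)/p^2) + 2 * ennreal ((1-p)/p) * ennreal (real n*(1-p)/p)
        + ennreal (real n*(1-p)/p^2 + (real n*(1-p)/p)^2)"
    by (simp add: nn_integral_add nn_integral_multc nn_integral_cmult mean_geom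
        nn_integral_geometric_pmf_square[OF p] measure_pmf.emeasure_space_1)
  also have "\<dots> = ennreal ((1-p)*(2-p)/p^2 + 2 * ((1-p)/p) * (real n*(1-p)/p)
        + (real n*(1-p)/p^2 + (real n*(1-p)/p)^2))"
    using p by (intro ennreal_expand) auto
  also have "(1-p)*(2-p)/p^2 + 2 * ((1-p)/p) * (real n*(1-p)/p) + (real n*(1-p)/p^2 + (real n*(1-p)/p)^2)
       = real (Suc n)*(1-p)/p^2 + (real (Suc n)*(1-p)/p)^2"
    using p by (simp add: field_simps power2_eq_square)
  finally show ?case .
qed

lemma prob_neg_binomial_pmf_abs_ge_Chebyshev:
  assumes p: "p \<in> {0<..1}" and d: "d > 0"
  shows "measure_pmf.prob (neg_binomial_pmf n p) {x. \<bar>real x - real n*(1-p)/p\<bar> \<ge> d}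
           \<le> (real n*(1-p)/p^2) / d^2"
proof -
  let ?M = "neg_binomial_pmf n p"
  have int_square: "integrable ?M (\<lambda>x. (real x)^2)"
    and E_square: "measure_pmf.expectation ?M (\<lambda>x. (real x)^2)
        = real n*(1-p)/p^2 + (real n*(1-p)/p)^2"
    using nn_integral_eq_integrable[of "\<lambda>x. (real x)^2" ?M "real n*(1-p)/p^2 + (real n*(1-p)/p)^2"]
      nn_integral_neg_binomial_pmf_square[OF p, of n] p by auto
  have var: "measure_pmf.variance ?M real = real n*(1-p)/p^2"
    using measure_pmf.variance_eq[OF integrable_neg_binomial_pmf_real[OF p] int_square] E_square
    by (simp add: expectation_neg_binomial_pmf[OF p])
  have "measure_pmf.prob ?M {x\<in>space ?M. \<bar>real x - measure_pmf.expectation ?M real\<bar> \<ge> d}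
          \<le> measure_pmf.variance ?M real / d^2"
    by (rule measure_pmf.Chebyshev_inequality) (use int_square d in auto)
  thus ?thesis using var by (simp add: expectation_neg_binomial_pmf[OF p])
qed

section \<open>Products of geometric distributions\<close>

text \<open>The parameter \<open>q\<close> is the ratio, not the success probability: a point \<open>f\<close> has
  probability \<open>(1 - q) ^ card B * q ^ total B f\<close>, and \<open>nu B t = Pi_geometric B (t / (card B + t))\<close>.\<close>

definition Pi_geometric :: "'b set \<Rightarrow> real \<Rightarrow> ('b \<Rightarrow> nat) pmf" where
  "Pi_geometric B q = Pi_pmf B undefined (\<lambda>_. geometric_pmf (1-q))"

definition total :: "'b set \<Rightarrow> ('b \<Rightarrow> nat) \<Rightarrow> nat" where
  "total B f = (\<Sum>b\<in>B. f b)"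

lemma Pi_geometric_insert:
  assumes "finite B" "b \<notin> B"
  shows "Pi_geometric (insert b B) q
           = map_pmf (\<lambda>(y,f). f(b:=y)) (pair_pmf (geometric_pmf (1-q)) (Pi_geometric B q))"
  unfolding Pi_geometric_def
  using Pi_pmf_insert[OF assms, of undefined "\<lambda>_. geometric_pmf (1-q)"] by simp

lemma nn_integral_Pi_geometric_insert:
  assumes "finite B" "b \<notin> B"
  shows "(\<integral>\<^sup>+f. h f \<partial>Pi_geometric (insert b B) q)
           = (\<integral>\<^sup>+y. \<integral>\<^sup>+g. h (g(b:=y)) \<partial>Pi_geometric B q \<partial>geometric_pmf (1-q))"
  by (simp add: Pi_geometric_insert[OF assms] nn_integral_pair_pmf' case_prod_unfold)

lemma total_fun_upd_insert:
  assumes "finite B" "b \<notin> B"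
  shows "total (insert b B) (f(b:=y)) = y + total B f"
proof -
  have "(\<Sum>c\<in>B. (f(b:=y)) c) = (\<Sum>c\<in>B. f c)" using assms by (intro sum.cong) auto
  thus ?thesis using assms by (simp add: total_def)
qed

lemma map_total_Pi_geometric:
  assumes "finite B"
  shows "map_pmf (total B) (Pi_geometric B q) = neg_binomial_pmf (card B) (1-q)"
  using assms
proof (induction B rule: finite_induct)
  case empty
  then show ?case by (simp add: Pi_geometric_def total_def)
next
  case (insert b B)
  have "map_pmf (total (insert b B)) (Pi_geometric (insert b B) q) =
        map_pmf (\<lambda>(y,f). y + total B f) (pair_pmf (geometric_pmf (1-q)) (Pi_geometric B q))"
    using insert
    by (simp add: Pi_geometric_insert pmf.map_comp o_def case_prod_unfold total_fun_upd_insert)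
  also have "\<dots> = map_pmf (\<lambda>(x,y). x + y)
      (map_pmf (\<lambda>(a, b). (id a, total B b)) (pair_pmf (geometric_pmf (1-q)) (Pi_geometric B q)))"
    by (simp add: pmf.map_comp o_def case_prod_unfold)
  also have "\<dots> = neg_binomial_pmf (card (insert b B)) (1-q)"
    unfolding map_pair using insert by (simp add: neg_binomial_pmf_Suc)
  finally show ?case .
qed

lemma pmf_Pi_geometric:
  assumes "finite B" "f \<in> B \<rightarrow>\<^sub>E (UNIV::nat set)" "q \<in> {0<..<1}"
  shows "pmf (Pi_geometric B q) f = (1-q)^card B * q^(total B f)"
proof -
  have "pmf (Pi_geometric B q) f = (\<Prod>b\<in>B. pmf (geometric_pmf (1-q)) (f b))"
    unfolding Pi_geometric_def using assms by (intro pmf_Pi') (auto simp: PiE_iff extensional_def)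
  also have "\<dots> = (\<Prod>b\<in>B. q^(f b) * (1-q))" using assms(3) by simp
  also have "\<dots> = q^(total B f) * (1-q)^card B"
    by (simp add: prod.distrib total_def power_sum)
  finally show ?thesis by simp
qed

lemma set_pmf_Pi_geometric:
  assumes "finite B" "f \<in> set_pmf (Pi_geometric B q)"
  shows "f \<in> B \<rightarrow>\<^sub>E (UNIV::nat set)"
  using set_Pi_pmf_subset[OF assms(1), of undefined "\<lambda>_. geometric_pmf (1-q)"] assms(2)
  by (auto simp: Pi_geometric_def PiE_iff extensional_def)

lemma integrable_total_Pi_geometric:
  assumes "finite B" "q \<in> {0<..<1}"
  shows "integrable (Pi_geometric B q) (\<lambda>f. real (total B f))"
    and "measure_pmf.expectation (Pi_geometric B q) (\<lambda>f. real (total B f))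
        = real (card B) * q / (1-q)"
proof -
  have p: "1 - q \<in> {0<..1}" using assms by auto
  have "integrable (map_pmf (total B) (Pi_geometric B q)) real"
    unfolding map_total_Pi_geometric[OF assms(1)] by (rule integrable_neg_binomial_pmf_real[OF p])
  thus "integrable (Pi_geometric B q) (\<lambda>f. real (total B f))" by simp
  have "measure_pmf.expectation (map_pmf (total B) (Pi_geometric B q)) real
      = real (card B) * q / (1-q)"
    unfolding map_total_Pi_geometric[OF assms(1)] using expectation_neg_binomial_pmf[OF p] by simp
  thus "measure_pmf.expectation (Pi_geometric B q) (\<lambda>f. real (total B f))
      = real (card B) * q / (1-q)"
    by simp
qed

section \<open>A variance bound for monotone functions of a geometric variable\<close>

lemma covariance_indicator_le:
  fixes M :: "'x pmf" and Z :: "'x \<Rightarrow> real"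
  assumes "\<And>k. 0 \<le> Z k" "\<And>k. Z k \<le> 1"
  shows "measure_pmf.expectation M (\<lambda>k. Z k * indicator A k)
           - measure_pmf.prob M A * measure_pmf.expectation M Z
         \<le> measure_pmf.prob M A * (1 - measure_pmf.prob M A)"
proof -
  let ?E = "measure_pmf.expectation M" and ?P = "measure_pmf.prob M A"
  have int_Z: "integrable M Z"
    by (rule measure_pmf.integrable_const_bound[where B=1]) (use assms in auto)
  have int_ZA: "integrable M (\<lambda>k. Z k * indicator A k)"
    by (rule measure_pmf.integrable_const_bound[where B=1])
       (use assms in \<open>auto simp: indicator_def\<close>)
  have int_A: "integrable M (indicator A :: 'x \<Rightarrow> real)"
    by (rule measure_pmf.integrable_const_bound[where B=1]) (auto simp: indicator_def)
  have "?E (\<lambda>k. Z k * indicator A k) \<le> ?E (indicator A)"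
    by (intro integral_mono int_ZA int_A) (use assms in \<open>auto simp: indicator_def\<close>)
  hence le_P: "?E (\<lambda>k. Z k * indicator A k) \<le> ?P" by simp
  have le_EZ: "?E (\<lambda>k. Z k * indicator A k) \<le> ?E Z"
    by (intro integral_mono int_ZA int_Z) (use assms in \<open>auto simp: indicator_def\<close>)
  have "?E (\<lambda>k. Z k * indicator A k) - ?P * ?E Z
      = (1 - ?P) * ?E (\<lambda>k. Z k * indicator A k) - ?P * (?E Z - ?E (\<lambda>k. Z k * indicator A k))"
    by (simp add: algebra_simps)
  also have "\<dots> \<le> (1 - ?P) * ?P - 0"
    using le_P le_EZ by (intro diff_mono mult_left_mono mult_nonneg_nonneg) auto
  finally show ?thesis by (simp add: mult.commute)
qed

lemma min_eq_telescope_indicator: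
  fixes Y :: "nat \<Rightarrow> 'a :: ring_1"
  shows "Y (min k N) = Y 0 + (\<Sum>j<N. (Y (Suc j) - Y j) * indicator {j<..} k)"
proof -
  have "(\<Sum>j<N. (Y (Suc j) - Y j) * indicator {j<..} k)
      = (\<Sum>j<N. if j < k then Y (Suc j) - Y j else 0)"
    by (intro sum.cong) (auto simp: indicator_def)
  also have "\<dots> = (\<Sum>j\<in>{j\<in>{..<N}. j < k}. Y (Suc j) - Y j)"
    by (rule sum.inter_filter[symmetric]) simp
  also have "{j\<in>{..<N}. j < k} = {..<min k N}" by auto
  finally show ?thesis by (simp add: sum_lessThan_telescope)
qed

lemma expectation_times_layers:
  fixes M :: "'x pmf" and g :: "'x \<Rightarrow> real" and A :: "nat \<Rightarrow> 'x \<Rightarrow> real"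
  assumes "integrable M g" "\<And>j k. \<bar>A j k\<bar> \<le> 1"
  shows "measure_pmf.expectation M (\<lambda>k. g k * (c + (\<Sum>j<N. D j * A j k)))
    = c * measure_pmf.expectation M g + (\<Sum>j<N. D j * measure_pmf.expectation M (\<lambda>k. g k * A j k))"
proof -
  have "integrable M (\<lambda>k. g k * A j k)" for j
    by (rule Bochner_Integration.integrable_bound[OF assms(1)])
       (use assms(2) in \<open>auto simp: abs_mult intro!: mult_left_le\<close>)
  moreover have "(\<lambda>k. g k * (c + (\<Sum>j<N. D j * A j k)))
      = (\<lambda>k. c * g k + (\<Sum>j<N. D j * (g k * A j k)))"
    by (simp add: distrib_left sum_distrib_left ac_simps)
  ultimately show ?thesis
    using assms by (simp add: Bochner_Integration.integral_add Bochner_Integration.integral_sum)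
qed

lemma sum_geometric_pmf_atMost: "(\<Sum>i\<le>j. q^i*(1-q)) = 1 - (q::real)^(Suc j)"
  by (induction j) (auto simp: algebra_simps)

lemma sum_times_geometric_pmf_atMost:
  assumes "(q::real) \<noteq> 1"
  shows "(\<Sum>i\<le>j. real i * (q^i*(1-q))) = q/(1-q) - q^(Suc j)*(real (Suc j) + q/(1-q))"
proof (induction j)
  case 0
  then show ?case using assms by (simp add: field_simps)
next
  case (Suc j)
  define r where "r = q/(1-q)"
  have r: "r = q + q*r" using assms by (simp add: r_def field_simps)
  define x where "x = q^(Suc j)"
  have step: "a - x*(n+r) + n*(x*(1-q)) = a - q*x*(n+1+r)" for a n :: real
  proof -
    have "x*r = x*q + q*x*r" using r by (metis distrib_left mult.assoc mult.commute)
    thus ?thesis by (simp add: algebra_simps)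
  qed
  have "(\<Sum>i\<le>Suc j. real i * (q^i*(1-q)))
      = (q/(1-q) - q^(Suc j)*(real (Suc j) + q/(1-q))) + real (Suc j)*(q^(Suc j)*(1-q))"
    using Suc by simp
  also have "\<dots> = q/(1-q) - q*x*(real (Suc j) + 1 + r)"
    using step[of "q/(1-q)" "real (Suc j)"] unfolding x_def r_def by simp
  also have "\<dots> = q/(1-q) - q^(Suc (Suc j))*(real (Suc (Suc j)) + q/(1-q))"
    by (simp add: x_def r_def)
  finally show ?case .
qed

context
  fixes q :: real assumes q: "q \<in> {0<..<1}"
begin

lemma prob_geometric_pmf_greaterThan: "measure_pmf.prob (geometric_pmf (1-q)) {j<..} = q^(Suc j)"
proof -
  have "measure_pmf.prob (geometric_pmf (1-q)) {..j} = (\<Sum>i\<le>j. pmf (geometric_pmf (1-q)) i)"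
    by (simp add: measure_measure_pmf_finite)
  also have "\<dots> = 1 - q^(Suc j)" using q by (simp add: sum_geometric_pmf_atMost)
  finally have "measure_pmf.prob (geometric_pmf (1-q)) {..j} = 1 - q^(Suc j)" .
  moreover have "{j<..} = UNIV - {..j}" by auto
  ultimately show ?thesis
    using measure_pmf.prob_compl[of "{..j}" "geometric_pmf (1-q)"] by simp
qed

lemma expectation_geometric_pmf_greaterThan:
  "measure_pmf.expectation (geometric_pmf (1-q)) (\<lambda>k. real k * indicator {j<..} k)
     = q^(Suc j)*(real (Suc j) + q/(1-q))"
proof -
  let ?E = "measure_pmf.expectation (geometric_pmf (1-q))"
  have p: "1 - q \<in> {0<..1}" using q by auto
  have E_atMost: "?E (\<lambda>k. real k * indicator {..j} k)
      = q/(1-q) - q^(Suc j)*(real (Suc j) + q/(1-q))"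
  proof -
    have "?E (\<lambda>k. real k * indicator {..j} k)
        = (\<Sum>i\<le>j. real i * indicator {..j} i * pmf (geometric_pmf (1-q)) i)"
      by (intro integral_measure_pmf_real) (auto simp: indicator_def)
    also have "\<dots> = (\<Sum>i\<le>j. real i * (q^i*(1-q)))"
      using q by (intro sum.cong) auto
    finally show ?thesis using q by (simp add: sum_times_geometric_pmf_atMost)
  qed
  have split: "real k * indicator {j<..} k = real k - real k * indicator {..j} k" for k
    by (auto simp: indicator_def)
  have int_atMost: "integrable (geometric_pmf (1-q)) (\<lambda>k. real k * indicator {..j} k)"
    by (rule Bochner_Integration.integrable_bound[OF integrable_real_geometric_pmf[OF p]])
       (auto simp: indicator_def)
  have "?E (\<lambda>k. real k * indicator {j<..} k) = ?E real - ?E (\<lambda>k. real k * indicator {..j} k)"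
    unfolding split
    by (rule Bochner_Integration.integral_diff[OF integrable_real_geometric_pmf[OF p] int_atMost])
  thus ?thesis using E_atMost expectation_geometric_pmf[OF p] by simp
qed

lemma covariance_geometric_greaterThan_le:
  assumes "\<And>k. 0 \<le> Z k" "\<And>k. Z k \<le> 1"
  shows "measure_pmf.expectation (geometric_pmf (1-q)) (\<lambda>k. Z k * indicator {j<..} k)
           - q^(Suc j) * measure_pmf.expectation (geometric_pmf (1-q)) Z
         \<le> q^(Suc j) * (real (Suc j) * (1-q))"
proof -
  have "1 - q^(Suc j) \<le> real (Suc j) * (1-q)"
    using Bernoulli_inequality[of "-(1-q)" "Suc j"] q by (simp add: algebra_simps)
  hence "q^(Suc j) * (1 - q^(Suc j)) \<le> q^(Suc j) * (real (Suc j) * (1-q))"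
    using q by (intro mult_left_mono) auto
  thus ?thesis
    using covariance_indicator_le[of Z "geometric_pmf (1-q)" "{j<..}", OF assms]
    by (simp add: prob_geometric_pmf_greaterThan)
qed

text \<open>For \<open>Z\<close> constant beyond \<open>N\<close>, write \<open>Z k = Y 0 + (\<Sum>j<N. D j * indicator {j<..} k)\<close> with
  increments \<open>D j \<ge> 0\<close>. The variance of \<open>Z\<close> is then a nonnegative combination of the covariances
  of \<open>Z\<close> with the events \<open>k > j\<close>.\<close>

lemma variance_geometric_truncated_le:
  fixes N :: nat
  assumes mono: "mono Y" and Y0: "\<And>k. 0 \<le> Y k" and Y1: "\<And>k. Y k \<le> 1"
  defines "Z \<equiv> \<lambda>k. Y (min k N)"
  shows "measure_pmf.expectation (geometric_pmf (1-q)) (\<lambda>k. (Z k)^2)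
           - (measure_pmf.expectation (geometric_pmf (1-q)) Z)^2
    \<le> (1-q) * (measure_pmf.expectation (geometric_pmf (1-q)) (\<lambda>k. real k * Z k)
           - q/(1-q) * measure_pmf.expectation (geometric_pmf (1-q)) Z)"
proof -
  let ?g = "geometric_pmf (1-q)"
  let ?E = "measure_pmf.expectation ?g"
  define D where "D j = Y (Suc j) - Y j" for j
  define A where "A j = (indicator {j<..} :: nat \<Rightarrow> real)" for j
  have p: "1 - q \<in> {0<..1}" using q by auto
  have D_nonneg: "D j \<ge> 0" for j using mono unfolding D_def by (simp add: monoD)
  have A_bound: "\<bar>A j k\<bar> \<le> 1" for j k by (simp add: A_def indicator_def)
  have Z_eq: "Z = (\<lambda>k. Y 0 + (\<Sum>j<N. D j * A j k))"
    unfolding Z_def D_def A_def by (rule ext) (rule min_eq_telescope_indicator)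
  have Z01: "0 \<le> Z k" "Z k \<le> 1" for k using Y0 Y1 by (auto simp: Z_def)
  have int_Z: "integrable ?g Z"
    by (rule measure_pmf.integrable_const_bound[where B=1]) (use Z01 in auto)
  have E_Z: "?E Z = Y 0 + (\<Sum>j<N. D j * q^(Suc j))"
    using expectation_times_layers[where M="?g" and g="\<lambda>_. 1" and A=A and c="Y 0" and D=D and N=N]
      A_bound prob_geometric_pmf_greaterThan
    by (simp add: Z_eq A_def)
  have E_kZ: "?E (\<lambda>k. real k * Z k)
      = Y 0 * (q/(1-q)) + (\<Sum>j<N. D j * (q^(Suc j)*(real (Suc j) + q/(1-q))))"
    using expectation_times_layers[OF integrable_real_geometric_pmf[OF p] A_bound,
        where c="Y 0" and D=D and N=N]
    by (simp add: Z_eq A_def expectation_geometric_pmf[OF p] expectation_geometric_pmf_greaterThan)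
  have E_Z2: "?E (\<lambda>k. (Z k)^2) = Y 0 * ?E Z + (\<Sum>j<N. D j * ?E (\<lambda>k. Z k * A j k))"
  proof -
    have "(\<lambda>k. (Z k)^2) = (\<lambda>k. Z k * (Y 0 + (\<Sum>j<N. D j * A j k)))"
      by (simp add: power2_eq_square fun_cong[OF Z_eq, symmetric])
    thus ?thesis
      using expectation_times_layers[OF int_Z A_bound, where c="Y 0" and D=D and N=N] by simp
  qed
  have "?E (\<lambda>k. (Z k)^2) - (?E Z)^2 = (\<Sum>j<N. D j * (?E (\<lambda>k. Z k * A j k) - q^(Suc j) * ?E Z))"
  proof -
    define e where "e = ?E Z"
    define sN where "sN = (\<Sum>j<N. D j * q^(Suc j))"
    define T where "T = (\<Sum>j<N. D j * ?E (\<lambda>k. Z k * A j k))"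
    have "(\<Sum>j<N. D j * (?E (\<lambda>k. Z k * A j k) - q^(Suc j) * e)) = T - sN * e"
      by (simp add: T_def sN_def sum_subtractf sum_distrib_right sum_distrib_left algebra_simps)
    moreover have "?E (\<lambda>k. (Z k)^2) - e^2 = T - sN * e"
      using E_Z2 E_Z by (simp add: T_def e_def[symmetric] sN_def power2_eq_square algebra_simps)
    ultimately show ?thesis by (simp add: e_def)
  qed
  also have "\<dots> \<le> (\<Sum>j<N. D j * (q^(Suc j) * (real (Suc j) * (1-q))))"
    using covariance_geometric_greaterThan_le[OF Z01]
    by (intro sum_mono mult_left_mono D_nonneg) (simp add: A_def)
  also have "\<dots> = (1-q) * (?E (\<lambda>k. real k * Z k) - q/(1-q) * ?E Z)"
    using q unfolding E_kZ E_Z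
    by (simp add: algebra_simps sum.distrib sum_distrib_left sum_subtractf)
  finally show ?thesis .
qed

lemma variance_geometric_mono_le:
  assumes mono: "mono Y" and Y0: "\<And>k. 0 \<le> Y k" and Y1: "\<And>k. Y k \<le> 1"
  shows "measure_pmf.expectation (geometric_pmf (1-q)) (\<lambda>k. (Y k)^2)
           - (measure_pmf.expectation (geometric_pmf (1-q)) Y)^2
    \<le> (1-q) * (measure_pmf.expectation (geometric_pmf (1-q)) (\<lambda>k. real k * Y k)
           - q/(1-q) * measure_pmf.expectation (geometric_pmf (1-q)) Y)"
proof -
  let ?g = "geometric_pmf (1-q)"
  let ?E = "measure_pmf.expectation ?g"
  have p: "1 - q \<in> {0<..1}" using q by auto
  have trunc: "(\<lambda>N. Y (min k N)) \<longlonglongrightarrow> Y k" for k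
    by (rule tendsto_eventually) (auto simp: eventually_sequentially intro!: exI[of _ k])
  have lim_E: "(\<lambda>N. ?E (\<lambda>k. Y (min k N))) \<longlonglongrightarrow> ?E Y"
    by (rule integral_dominated_convergence[where w="\<lambda>_. 1"]) (use Y0 Y1 trunc in auto)
  have lim_E2: "(\<lambda>N. ?E (\<lambda>k. (Y (min k N))^2)) \<longlonglongrightarrow> ?E (\<lambda>k. (Y k)^2)"
    by (rule integral_dominated_convergence[where w="\<lambda>_. 1"])
       (use Y0 Y1 in \<open>auto intro!: tendsto_intros trunc simp: abs_square_le_1\<close>)
  have lim_Ek: "(\<lambda>N. ?E (\<lambda>k. real k * Y (min k N))) \<longlonglongrightarrow> ?E (\<lambda>k. real k * Y k)"
  proof (rule integral_dominated_convergence[where w="real"])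
    show "integrable ?g real" by (rule integrable_real_geometric_pmf[OF p])
    show "AE x in ?g. (\<lambda>N. real x * Y (min x N)) \<longlonglongrightarrow> real x * Y x"
      by (auto intro!: tendsto_intros trunc)
    fix N show "AE x in ?g. norm (real x * Y (min x N)) \<le> real x"
      using Y0 Y1 by (auto simp: abs_mult intro!: mult_left_le)
  qed auto
  have "(\<lambda>N. ?E (\<lambda>k. (Y (min k N))^2) - (?E (\<lambda>k. Y (min k N)))^2)
      \<longlonglongrightarrow> ?E (\<lambda>k. (Y k)^2) - (?E Y)^2"
    by (intro tendsto_intros lim_E lim_E2)
  moreover have "(\<lambda>N. (1-q) * (?E (\<lambda>k. real k * Y (min k N)) - q/(1-q) * ?E (\<lambda>k. Y (min k N))))
      \<longlonglongrightarrow> (1-q) * (?E (\<lambda>k. real k * Y k) - q/(1-q) * ?E Y)"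
    by (intro tendsto_intros lim_E lim_Ek)
  ultimately show ?thesis
    by (rule LIMSEQ_le) (use variance_geometric_truncated_le[OF mono Y0 Y1] in auto)
qed

end

section \<open>An Efron--Stein type inequality for upper sets\<close>

definition geom_prob :: "'b set \<Rightarrow> real \<Rightarrow> ('b \<Rightarrow> nat) set \<Rightarrow> real" where
  "geom_prob B q M = measure_pmf.prob (Pi_geometric B q) M"

definition geom_weight :: "'b set \<Rightarrow> real \<Rightarrow> ('b \<Rightarrow> nat) set \<Rightarrow> real" where
  "geom_weight B q M
      = measure_pmf.expectation (Pi_geometric B q) (\<lambda>f. real (total B f) * indicator M f)"

definition slice :: "('b \<Rightarrow> nat) set \<Rightarrow> 'b \<Rightarrow> nat \<Rightarrow> ('b \<Rightarrow> nat) set" where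
  "slice M b y = {g. g(b:=y) \<in> M}"

lemma geom_prob_UNIV: "geom_prob B q UNIV = 1" by (simp add: geom_prob_def)

lemma integrable_total_indicator:
  assumes "finite B" "q \<in> {0<..<1}"
  shows "integrable (Pi_geometric B q) (\<lambda>f. real (total B f) * indicator M f)"
  by (rule Bochner_Integration.integrable_bound[OF integrable_total_Pi_geometric(1)[OF assms]])
     (auto simp: indicator_def)

lemma geom_weight_bounds:
  assumes "finite B" "q \<in> {0<..<1}"
  shows "0 \<le> geom_weight B q M" "geom_weight B q M \<le> real (card B) * q / (1-q)"
proof -
  show "0 \<le> geom_weight B q M" unfolding geom_weight_def by (intro integral_nonneg_AE) auto
  have "geom_weight B q M \<le> measure_pmf.expectation (Pi_geometric B q) (\<lambda>f. real (total B f))"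
    unfolding geom_weight_def
    by (intro integral_mono integrable_total_indicator integrable_total_Pi_geometric assms)
       (auto simp: indicator_def)
  thus "geom_weight B q M \<le> real (card B) * q / (1-q)"
    using integrable_total_Pi_geometric(2)[OF assms] by simp
qed

lemma geom_prob_insert:
  assumes "finite B" "b \<notin> B" "q \<in> {0<..<1}"
  shows "geom_prob (insert b B) q M
      = measure_pmf.expectation (geometric_pmf (1-q)) (\<lambda>y. geom_prob B q (slice M b y))"
proof -
  have "ennreal (geom_prob (insert b B) q M) = (\<integral>\<^sup>+f. indicator M f \<partial>Pi_geometric (insert b B) q)"
    by (simp add: geom_prob_def measure_pmf.emeasure_eq_measure[symmetric])
  also have "\<dots> = (\<integral>\<^sup>+y. \<integral>\<^sup>+g. indicator (slice M b y) g \<partial>Pi_geometric B q \<partial>geometric_pmf (1-q))"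
    by (simp add: nn_integral_Pi_geometric_insert[OF assms(1,2)] slice_def indicator_def)
  also have "\<dots> = (\<integral>\<^sup>+y. ennreal (geom_prob B q (slice M b y)) \<partial>geometric_pmf (1-q))"
    by (simp add: geom_prob_def measure_pmf.emeasure_eq_measure)
  also have "\<dots>
      = ennreal (measure_pmf.expectation (geometric_pmf (1-q)) (\<lambda>y. geom_prob B q (slice M b y)))"
    by (rule nn_integral_eq_integral)
       (auto simp: geom_prob_def intro!: measure_pmf.integrable_const_bound[where B=1])
  finally show ?thesis
    by (subst (asm) ennreal_inj) (auto simp: geom_prob_def intro!: integral_nonneg_AE)
qed

lemma geom_weight_insert:
  assumes "finite B" "b \<notin> B" "q \<in> {0<..<1}"
  shows "geom_weight (insert b B) q M = measure_pmf.expectation (geometric_pmf (1-q))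
             (\<lambda>y. real y * geom_prob B q (slice M b y) + geom_weight B q (slice M b y))"
proof -
  define h where "h y = real y * geom_prob B q (slice M b y) + geom_weight B q (slice M b y)" for y
  have h_nonneg: "h y \<ge> 0" for y
    using geom_weight_bounds(1)[OF assms(1,3)] by (simp add: h_def geom_prob_def)
  have int_h: "integrable (geometric_pmf (1-q)) h"
    unfolding h_def
  proof (intro Bochner_Integration.integrable_add)
    show "integrable (geometric_pmf (1-q)) (\<lambda>y. real y * geom_prob B q (slice M b y))"
      by (rule Bochner_Integration.integrable_bound[OF integrable_real_geometric_pmf])
         (use assms in \<open>auto simp: geom_prob_def intro!: mult_left_le\<close>)
    show "integrable (geometric_pmf (1-q)) (\<lambda>y. geom_weight B q (slice M b y))"
      by (rule measure_pmf.integrable_const_bound[where B="real (card B) * q / (1-q)"])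
         (use geom_weight_bounds[OF assms(1,3)] in auto)
  qed
  have slice_integral: "(\<integral>\<^sup>+g. ennreal (real y) * indicator (slice M b y) g
        + ennreal (real (total B g) * indicator (slice M b y) g) \<partial>Pi_geometric B q) = ennreal (h y)" for y
  proof -
    have "(\<integral>\<^sup>+g. ennreal (real (total B g) * indicator (slice M b y) g) \<partial>Pi_geometric B q)
        = ennreal (geom_weight B q (slice M b y))"
      unfolding geom_weight_def
      by (rule nn_integral_eq_integral) (auto intro!: integrable_total_indicator assms)
    moreover have "(\<integral>\<^sup>+g. ennreal (real y) * indicator (slice M b y) g \<partial>Pi_geometric B q)
        = ennreal (real y * geom_prob B q (slice M b y))"
      by (simp add: nn_integral_cmult geom_prob_def measure_pmf.emeasure_eq_measure ennreal_mult)
    ultimately show ?thesis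
      using geom_weight_bounds(1)[OF assms(1,3)]
      by (subst nn_integral_add) (auto simp: h_def geom_prob_def ennreal_plus)
  qed
  have "ennreal (geom_weight (insert b B) q M)
      = (\<integral>\<^sup>+f. ennreal (real (total (insert b B) f) * indicator M f) \<partial>Pi_geometric (insert b B) q)"
    unfolding geom_weight_def
    by (rule nn_integral_eq_integral[symmetric])
       (use assms in \<open>auto intro!: integrable_total_indicator\<close>)
  also have "\<dots> = (\<integral>\<^sup>+y. \<integral>\<^sup>+g. ennreal (real y) * indicator (slice M b y) g
      + ennreal (real (total B g) * indicator (slice M b y) g) \<partial>Pi_geometric B q \<partial>geometric_pmf (1-q))"
    by (simp add: nn_integral_Pi_geometric_insert[OF assms(1,2)] total_fun_upd_insert[OF assms(1,2)]
        slice_def indicator_def)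
       (intro nn_integral_cong, auto simp: of_bool_def ennreal_plus)
  also have "\<dots> = ennreal (measure_pmf.expectation (geometric_pmf (1-q)) h)"
    unfolding slice_integral by (rule nn_integral_eq_integral[OF int_h]) (simp add: h_nonneg)
  finally show ?thesis
    unfolding h_def[symmetric]
    by (subst (asm) ennreal_inj) (auto simp: geom_weight_def intro!: integral_nonneg_AE h_nonneg)
qed

lemma upper_set_slice:
  assumes "b \<notin> B" "upper_set (insert b B) M"
  shows "upper_set B (slice M b y)"
  unfolding upper_set_def slice_def
proof (intro ballI impI, simp)
  fix f g assume f: "f(b:=y) \<in> M" and g: "g \<in> B \<rightarrow>\<^sub>E (UNIV::nat set)" and le: "\<forall>c\<in>B. f c \<le> g c"
  have g': "g(b:=y) \<in> insert b B \<rightarrow>\<^sub>E (UNIV::nat set)"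
    using g assms(1) by (auto simp: PiE_iff extensional_def)
  show "g(b:=y) \<in> M"
    using assms(2) f g' le unfolding upper_set_def by auto
qed

lemma geom_prob_slice_mono:
  assumes "finite B" "b \<notin> B" "upper_set (insert b B) M" "y \<le> y'"
  shows "geom_prob B q (slice M b y) \<le> geom_prob B q (slice M b y')"
  unfolding geom_prob_def
proof (rule measure_pmf.finite_measure_mono_AE)
  show "AE x in Pi_geometric B q. x \<in> slice M b y \<longrightarrow> x \<in> slice M b y'"
  proof (subst AE_measure_pmf_iff, intro ballI impI)
    fix x assume x: "x \<in> set_pmf (Pi_geometric B q)" and xs: "x \<in> slice M b y"
    have "x(b:=y') \<in> insert b B \<rightarrow>\<^sub>E (UNIV::nat set)"
      using set_pmf_Pi_geometric[OF assms(1) x] assms(2) by (auto simp: PiE_iff extensional_def)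
    moreover have "x(b:=y) \<in> M" using xs by (simp add: slice_def)
    ultimately show "x \<in> slice M b y'"
      using assms(3,4) unfolding upper_set_def slice_def by auto
  qed
qed auto

text \<open>Condition on the coordinate \<open>b\<close>: with \<open>Y y\<close> the probability of the slice at height \<open>y\<close>,
  \<open>P (1 - P) = E [Y (1 - Y)] + Var Y\<close>. The induction hypothesis bounds the first term slice by
  slice, and \<open>variance_geometric_mono_le\<close> the second, \<open>Y\<close> being monotone for an upper set.\<close>

lemma geom_prob_variance_le:
  assumes "finite B" "q \<in> {0<..<1}" "upper_set B M"
  shows "geom_prob B q M * (1 - geom_prob B q M)
           \<le> (1-q) * (geom_weight B q M - real (card B) * q/(1-q) * geom_prob B q M)"
  using assms(1,3)
proof (induction B arbitrary: M rule: finite_induct)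
  case empty
  have "geom_prob {} q M = indicator M (\<lambda>_. undefined)"
    by (simp add: geom_prob_def Pi_geometric_def)
  moreover have "geom_weight {} q M = 0" by (simp add: geom_weight_def Pi_geometric_def total_def)
  ultimately show ?case by (auto simp: indicator_def)
next
  case (insert b B)
  let ?E = "measure_pmf.expectation (geometric_pmf (1-q))"
  define Y where "Y y = geom_prob B q (slice M b y)" for y
  define Z where "Z y = geom_weight B q (slice M b y)" for y
  define tB where "tB = real (card B) * q/(1-q)"
  have Y_bounds: "0 \<le> Y y" "Y y \<le> 1" for y by (auto simp: Y_def geom_prob_def)
  have mono_Y: "mono Y" unfolding mono_def Y_def
    using geom_prob_slice_mono[OF insert(1,2) insert(4)] by blast
  have IH: "Y y * (1 - Y y) \<le> (1-q) * (Z y - tB * Y y)" for y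
    unfolding Y_def Z_def tB_def by (rule insert(3)[OF upper_set_slice[OF insert(2,4)]])
  have P: "geom_prob (insert b B) q M = ?E Y"
    unfolding Y_def by (rule geom_prob_insert[OF insert(1,2) assms(2)])
  have int_Y: "integrable (geometric_pmf (1-q)) Y"
    by (rule measure_pmf.integrable_const_bound[where B=1]) (use Y_bounds in auto)
  have int_Y2: "integrable (geometric_pmf (1-q)) (\<lambda>y. (Y y)^2)"
    by (rule measure_pmf.integrable_const_bound[where B=1])
       (use Y_bounds in \<open>auto simp: abs_square_le_1\<close>)
  have int_Z: "integrable (geometric_pmf (1-q)) Z"
    by (rule measure_pmf.integrable_const_bound[where B=tB])
       (use geom_weight_bounds[OF insert(1) assms(2)] in \<open>auto simp: Z_def tB_def\<close>)
  have int_yY: "integrable (geometric_pmf (1-q)) (\<lambda>y. real y * Y y)"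
    by (rule Bochner_Integration.integrable_bound[OF integrable_real_geometric_pmf])
       (use assms(2) Y_bounds in \<open>auto intro!: mult_left_le\<close>)
  have Q: "geom_weight (insert b B) q M = ?E (\<lambda>y. real y * Y y) + ?E Z"
    unfolding geom_weight_insert[OF insert(1,2) assms(2)] Y_def[symmetric] Z_def[symmetric]
    by (rule Bochner_Integration.integral_add[OF int_yY int_Z])
  have card: "real (card (insert b B)) * q/(1-q) = tB + q/(1-q)"
    using insert(1,2) by (simp add: tB_def add_divide_distrib algebra_simps)
  have var_Y: "?E (\<lambda>y. (Y y)^2) - (?E Y)^2 \<le> (1-q) * (?E (\<lambda>y. real y * Y y) - q/(1-q) * ?E Y)"
    by (rule variance_geometric_mono_le[OF assms(2) mono_Y Y_bounds])
  have E_IH: "?E (\<lambda>y. Y y - (Y y)^2) \<le> ?E (\<lambda>y. (1-q) * (Z y - tB * Y y))"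
    by (rule integral_mono)
       (use IH int_Y int_Y2 int_Z in \<open>auto simp: power2_eq_square algebra_simps\<close>)
  have E_diff: "?E (\<lambda>y. Y y - (Y y)^2) = ?E Y - ?E (\<lambda>y. (Y y)^2)"
    by (rule Bochner_Integration.integral_diff[OF int_Y int_Y2])
  have E_scaled: "?E (\<lambda>y. (1-q) * (Z y - tB * Y y)) = (1-q) * (?E Z - tB * ?E Y)"
    using int_Z int_Y by simp
  show ?case
    unfolding P Q card using var_Y E_IH E_diff E_scaled
    by (simp add: algebra_simps power2_eq_square)
qed


section \<open>The generating function of the level counts\<close>

lemma level_finite:
  assumes "finite B" shows "finite (level B s)"
proof (rule finite_subset)
  show "level B s \<subseteq> B \<rightarrow>\<^sub>E {..s}"
  proof
    fix f assume f: "f \<in> level B s"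
    have "f b \<le> s" if "b \<in> B" for b
      using f member_le_sum[of b B f] that assms by (auto simp: level_def)
    thus "f \<in> B \<rightarrow>\<^sub>E {..s}" using f by (auto simp: level_def PiE_iff)
  qed
  show "finite (B \<rightarrow>\<^sub>E {..s})" using assms by (intro finite_PiE) auto
qed

definition level_count :: "'b set \<Rightarrow> ('b \<Rightarrow> nat) set \<Rightarrow> nat \<Rightarrow> real" where
  "level_count B M s = real (card (M \<inter> level B s))"

lemma level_count_nonneg: "level_count B M s \<ge> 0" by (simp add: level_count_def)

lemma level_count_total_ge:
  "level_count B {f. s \<le> total B f} r = (if s \<le> r then real (card (level B r)) else 0)"
proof -
  have "{f. s \<le> total B f} \<inter> level B r = (if s \<le> r then level B r else {})"
    by (auto simp: level_def total_def)
  thus ?thesis by (simp add: level_count_def)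
qed

lemma level_count_total_gt:
  "level_count B {f. s < total B f} r = (if s < r then real (card (level B r)) else 0)"
proof -
  have "{f. s < total B f} \<inter> level B r = (if s < r then level B r else {})"
    by (auto simp: level_def total_def)
  thus ?thesis by (simp add: level_count_def)
qed

lemma level_count_UNIV: "level_count B UNIV r = real (card (level B r))"
  by (simp add: level_count_def)

lemma prob_Pi_geometric_level_subset:
  assumes "finite B" "q \<in> {0<..<1}"
  shows "measure_pmf.prob (Pi_geometric B q) (M \<inter> level B s)
      = level_count B M s * ((1-q)^card B * q^s)"
proof -
  have fin: "finite (M \<inter> level B s)" using level_finite[OF assms(1)] by auto
  have "measure_pmf.prob (Pi_geometric B q) (M \<inter> level B s)
      = (\<Sum>f\<in>M \<inter> level B s. pmf (Pi_geometric B q) f)"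
    by (rule measure_measure_pmf_finite[OF fin])
  also have "\<dots> = (\<Sum>f\<in>M \<inter> level B s. (1-q)^card B * q^s)"
    using assms by (intro sum.cong refl) (auto simp: pmf_Pi_geometric level_def total_def)
  finally show ?thesis by (simp add: level_count_def)
qed

lemma nn_integral_Pi_geometric_levels:
  assumes "finite B" "q \<in> {0<..<1}" "\<And>s. h s \<ge> 0"
  shows "(\<integral>\<^sup>+f. ennreal (h (total B f)) * indicator M f \<partial>Pi_geometric B q)
       = (\<Sum>s. ennreal (h s * (level_count B M s * ((1-q)^card B * q^s))))"
proof -
  have "(\<integral>\<^sup>+f. ennreal (h (total B f)) * indicator M f \<partial>Pi_geometric B q)
      = (\<integral>\<^sup>+f. (\<Sum>s. ennreal (h s) * indicator (M \<inter> level B s) f) \<partial>Pi_geometric B q)"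
  proof (rule nn_integral_cong_AE, subst AE_measure_pmf_iff, intro ballI)
    fix f assume "f \<in> set_pmf (Pi_geometric B q)"
    hence fP: "f \<in> B \<rightarrow>\<^sub>E (UNIV::nat set)" by (rule set_pmf_Pi_geometric[OF assms(1)])
    have "(\<lambda>s. ennreal (h s) * indicator (M \<inter> level B s) f)
        = (\<lambda>s. if s = total B f then ennreal (h s) * indicator M f else 0)"
      using fP by (auto simp: fun_eq_iff indicator_def level_def total_def)
    moreover have "(\<lambda>s. if s = total B f then ennreal (h s) * indicator M f else 0)
        sums (ennreal (h (total B f)) * indicator M f)"
      using sums_single[of "total B f" "\<lambda>s. ennreal (h s) * indicator M f"] by simp
    ultimately show "ennreal (h (total B f)) * indicator M f
        = (\<Sum>s. ennreal (h s) * indicator (M \<inter> level B s) f)"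
      by (simp add: sums_iff)
  qed
  also have "\<dots> = (\<Sum>s. \<integral>\<^sup>+f. ennreal (h s) * indicator (M \<inter> level B s) f \<partial>Pi_geometric B q)"
    by (rule nn_integral_suminf) auto
  also have "\<dots> = (\<Sum>s. ennreal (h s * (level_count B M s * ((1-q)^card B * q^s))))"
    using assms
    by (simp add: nn_integral_cmult_indicator measure_pmf.emeasure_eq_measure
        prob_Pi_geometric_level_subset ennreal_mult level_count_nonneg)
  finally show ?thesis .
qed

lemma sums_of_ennreal_suminf:
  assumes "\<And>i. 0 \<le> a i" "0 \<le> x" "(\<Sum>i. ennreal (a i)) = ennreal x"
  shows "a sums x"
proof -
  have "(\<lambda>i. ennreal (a i)) sums ennreal x"
    using summable_sums[OF summableI, of "\<lambda>i. ennreal (a i)"] assms(3) by simp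
  thus ?thesis using assms(1,2) by simp
qed

lemma geom_prob_sums:
  assumes "finite B" "q \<in> {0<..<1}"
  shows "(\<lambda>s. level_count B M s * ((1-q)^card B * q^s)) sums geom_prob B q M"
proof -
  have "(\<Sum>s. ennreal (1 * (level_count B M s * ((1-q)^card B * q^s))))
      = (\<integral>\<^sup>+f. ennreal 1 * indicator M f \<partial>Pi_geometric B q)"
    using nn_integral_Pi_geometric_levels[OF assms, of "\<lambda>_. 1" M] by simp
  also have "\<dots> = ennreal (geom_prob B q M)"
    by (simp add: geom_prob_def measure_pmf.emeasure_eq_measure)
  finally have "(\<Sum>s. ennreal (level_count B M s * ((1-q)^card B * q^s)))
      = ennreal (geom_prob B q M)"
    by simp
  thus ?thesis
    by (rule sums_of_ennreal_suminf[rotated 2])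
       (use assms in \<open>auto simp: level_count_def geom_prob_def\<close>)
qed

lemma geom_weight_sums:
  assumes "finite B" "q \<in> {0<..<1}"
  shows "(\<lambda>s. real s * (level_count B M s * ((1-q)^card B * q^s))) sums geom_weight B q M"
proof -
  have "(\<Sum>s. ennreal (real s * (level_count B M s * ((1-q)^card B * q^s))))
      = (\<integral>\<^sup>+f. ennreal (real (total B f)) * indicator M f \<partial>Pi_geometric B q)"
    using nn_integral_Pi_geometric_levels[OF assms, of real M] by simp
  also have "\<dots> = (\<integral>\<^sup>+f. ennreal (real (total B f) * indicator M f) \<partial>Pi_geometric B q)"
    by (intro nn_integral_cong) (auto simp: indicator_def)
  also have "\<dots> = ennreal (geom_weight B q M)"
    unfolding geom_weight_def by (rule nn_integral_eq_integral)
       (auto intro!: integrable_total_indicator assms)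
  finally show ?thesis
    by (rule sums_of_ennreal_suminf[rotated 2])
       (use assms geom_weight_bounds[OF assms] in \<open>auto simp: level_count_def\<close>)
qed

lemma summable_level_count:
  assumes "finite B" "\<bar>z\<bar> < 1"
  shows "summable (\<lambda>s. level_count B M s * z^s)"
proof (cases "z = 0")
  case True
  then show ?thesis by simp
next
  case False
  define q where "q = \<bar>z\<bar>"
  have q: "q \<in> {0<..<1}" using False assms by (auto simp: q_def)
  have "summable (\<lambda>s. level_count B M s * ((1-q)^card B * q^s))"
    using geom_prob_sums[OF assms(1) q] by (simp add: sums_iff)
  hence "summable (\<lambda>s. (level_count B M s * ((1-q)^card B * q^s)) / (1-q)^card B)"
    by (rule summable_divide)
  moreover have "(\<lambda>s. (level_count B M s * ((1-q)^card B * q^s)) / (1-q)^card B)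
      = (\<lambda>s. norm (level_count B M s * z^s))"
  proof
    fix s
    have "(1-q)^card B \<noteq> 0" using q by simp
    thus "(level_count B M s * ((1-q)^card B * q^s)) / (1-q)^card B
        = norm (level_count B M s * z^s)"
      using assms(2) by (simp add: q_def abs_mult power_abs level_count_nonneg)
  qed
  ultimately have "summable (\<lambda>s. norm (level_count B M s * z^s))" by simp
  thus ?thesis by (rule summable_norm_cancel)
qed

definition level_gf :: "'b set \<Rightarrow> ('b \<Rightarrow> nat) set \<Rightarrow> real \<Rightarrow> real" where
  "level_gf B M z = (\<Sum>s. level_count B M s * z^s)"

definition level_gf' :: "'b set \<Rightarrow> ('b \<Rightarrow> nat) set \<Rightarrow> real \<Rightarrow> real" where
  "level_gf' B M z = (\<Sum>s. diffs (level_count B M) s * z^s)"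

lemma geom_prob_eq_level_gf:
  assumes "finite B" "q \<in> {0<..<1}"
  shows "geom_prob B q M = (1-q)^card B * level_gf B M q"
proof -
  have "(\<lambda>s. (1-q)^card B * (level_count B M s * q^s)) sums ((1-q)^card B * level_gf B M q)"
    unfolding level_gf_def using summable_level_count[OF assms(1), of q] assms(2)
    by (intro sums_mult summable_sums) auto
  moreover have "(\<lambda>s. (1-q)^card B * (level_count B M s * q^s))
      = (\<lambda>s. level_count B M s * ((1-q)^card B * q^s))"
    by (simp add: fun_eq_iff algebra_simps)
  ultimately have "(\<lambda>s. level_count B M s * ((1-q)^card B * q^s))
      sums ((1-q)^card B * level_gf B M q)"
    by simp
  with geom_prob_sums[OF assms, of M] show ?thesis by (rule sums_unique2)
qed

lemma level_gf_has_derivative: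
  assumes "finite B" "q \<in> {0<..<1}"
  shows "(level_gf B M has_field_derivative level_gf' B M q) (at q)"
  unfolding level_gf_def[abs_def] level_gf'_def
  by (rule termdiffs_strong'[where K=1]) (use summable_level_count[OF assms(1)] assms(2) in auto)

lemma geom_weight_eq_level_gf:
  assumes "finite B" "q \<in> {0<..<1}"
  shows "geom_weight B q M = (1-q)^card B * q * level_gf' B M q"
proof -
  have sd: "summable (\<lambda>s. diffs (level_count B M) s * q^s)"
    by (rule termdiff_converges[where K=1]) (use summable_level_count[OF assms(1)] assms(2) in auto)
  have "(\<lambda>s. (1-q)^card B * q * (diffs (level_count B M) s * q^s))
      sums ((1-q)^card B * q * (\<Sum>s. diffs (level_count B M) s * q^s))"
    by (intro sums_mult summable_sums sd)
  hence "(\<lambda>s. real (Suc s) * (level_count B M (Suc s) * ((1-q)^card B * q^(Suc s))))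
      sums ((1-q)^card B * q * (\<Sum>s. diffs (level_count B M) s * q^s))"
    by (simp add: diffs_def algebra_simps)
  hence "(\<lambda>s. real s * (level_count B M s * ((1-q)^card B * q^s)))
      sums ((1-q)^card B * q * (\<Sum>s. diffs (level_count B M) s * q^s))"
    by (subst (asm) sums_Suc_iff) simp
  with geom_weight_sums[OF assms] show ?thesis unfolding level_gf'_def by (rule sums_unique2)
qed

text \<open>A closed form of \<open>q \<mapsto> geom_prob B q M\<close> on \<open>{0<..<1}\<close> that is visibly differentiable.\<close>

definition geom_prob_ext :: "'b set \<Rightarrow> ('b \<Rightarrow> nat) set \<Rightarrow> real \<Rightarrow> real" where
  "geom_prob_ext B M z = (1-z)^card B * level_gf B M z"

definition geom_prob_ext' :: "'b set \<Rightarrow> ('b \<Rightarrow> nat) set \<Rightarrow> real \<Rightarrow> real" where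
  "geom_prob_ext' B M z
      = (1-z)^card B * level_gf' B M z - real (card B) * (1-z)^(card B - 1) * level_gf B M z"

lemma geom_prob_ext_eq: "finite B \<Longrightarrow> q \<in> {0<..<1} \<Longrightarrow> geom_prob_ext B M q = geom_prob B q M"
  by (simp add: geom_prob_ext_def geom_prob_eq_level_gf)

lemma geom_prob_ext_has_derivative:
  assumes "finite B" "q \<in> {0<..<1}"
  shows "(geom_prob_ext B M has_real_derivative geom_prob_ext' B M q) (at q)"
  unfolding geom_prob_ext_def[abs_def] geom_prob_ext'_def using assms
  by (auto intro!: derivative_eq_intros level_gf_has_derivative simp: algebra_simps)

lemma geom_prob_ext_deriv_ge:
  assumes "finite B" "q \<in> {0<..<1}" "upper_set B M" "card B > 0"
  shows "geom_prob_ext B M q * (1 - geom_prob_ext B M q) \<le> q * (1-q) * geom_prob_ext' B M q"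
proof -
  let ?n = "card B"
  have pw: "(1-q)^?n = (1-q) * (1-q)^(?n - 1)" using assms(4) by (cases ?n) auto
  have eq: "(1-q) * (geom_weight B q M - real ?n * q/(1-q) * geom_prob B q M)
      = q * (1-q) * geom_prob_ext' B M q"
    using assms(2)
    unfolding geom_prob_eq_level_gf[OF assms(1,2)] geom_weight_eq_level_gf[OF assms(1,2)]
      geom_prob_ext'_def
    by (subst (2) pw) (simp add: field_simps)
  show ?thesis
    unfolding geom_prob_ext_eq[OF assms(1,2)]
    using geom_prob_variance_le[OF assms(1,2,3)] eq by linarith
qed

text \<open>The log-odds of \<open>geom_prob\<close> grow at least as fast as the log-odds \<open>ln (q / (1 - q))\<close>
  of the ratio itself: after multiplying out, this is exactly the inequality
  \<open>geom_prob_ext_deriv_ge\<close>.\<close>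

lemma geom_odds_mono:
  assumes B: "finite B" "card B > 0" and up: "upper_set B M"
    and bounds: "\<And>q. q \<in> {0<..<1} \<Longrightarrow> 0 < geom_prob B q M \<and> geom_prob B q M < 1"
    and q: "0 < q1" "q1 \<le> q2" "q2 < 1"
  shows "geom_prob B q1 M / (1 - geom_prob B q1 M) * ((1-q1)/q1)
           \<le> geom_prob B q2 M / (1 - geom_prob B q2 M) * ((1-q2)/q2)"
proof -
  define phi where "phi z
      = ln (geom_prob_ext B M z) - ln (1 - geom_prob_ext B M z) - ln z + ln (1 - z)"
    for z
  have "phi q1 \<le> phi q2"
  proof (rule DERIV_nonneg_imp_nondecreasing[OF q(2)])
    fix z assume "q1 \<le> z" "z \<le> q2"
    hence z: "z \<in> {0<..<1}" using q by auto
    define a where "a = geom_prob_ext B M z"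
    define d where "d = geom_prob_ext' B M z"
    have a: "0 < a" "a < 1" using bounds[OF z] geom_prob_ext_eq[OF B(1) z] by (auto simp: a_def)
    have "(phi has_real_derivative (d / a + d / (1 - a) - 1 / z - 1 / (1 - z))) (at z)"
      unfolding phi_def[abs_def] using a z
      by (auto intro!: derivative_eq_intros geom_prob_ext_has_derivative[OF B(1) z]
               simp: a_def d_def field_simps)
    moreover have "d / a + d / (1 - a) - 1 / z - 1 / (1 - z)
        = (z*(1-z)*d - a*(1-a)) / (a*(1-a)*z*(1-z))"
      using a z by (simp add: field_simps)
    moreover have "a * (1 - a) \<le> z * (1-z) * d"
      unfolding a_def d_def by (rule geom_prob_ext_deriv_ge[OF B(1) z up B(2)])
    ultimately show "\<exists>y. (phi has_real_derivative y) (at z) \<and> 0 \<le> y"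
      using a z by (metis divide_nonneg_pos diff_ge_0_iff_ge greaterThanLessThan_iff
          mult_pos_pos diff_gt_0_iff_gt)
  qed
  moreover have "exp (phi z) = geom_prob B z M / (1 - geom_prob B z M) * ((1-z)/z)"
    if "z \<in> {0<..<1}" for z
    using bounds[OF that] that by (simp add: phi_def exp_diff exp_add geom_prob_ext_eq[OF B(1)])
  ultimately show ?thesis
    using q
    by (metis exp_le_cancel_iff greaterThanLessThan_iff order.strict_trans1 order.strict_trans2)
qed

section \<open>The geometric threshold\<close>

locale nontrivial_upper_set =
  fixes B :: "'b set" and M :: "('b \<Rightarrow> nat) set"
  assumes fin: "finite B" and ne: "B \<noteq> {}" and Mne: "M \<noteq> {}"
    and Msub: "M \<subseteq> B \<rightarrow>\<^sub>E (UNIV::nat set)" and up: "upper_set B M"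
    and zero: "zero_fun B \<notin> M"
begin

abbreviation "n \<equiv> card B"

lemma n_pos: "n > 0" using fin ne by (simp add: card_gt_0_iff)

lemma geom_prob_pos: assumes q: "q \<in> {0<..<1}" shows "0 < geom_prob B q M"
proof -
  obtain g where g: "g \<in> M" using Mne by auto
  have gP: "g \<in> B \<rightarrow>\<^sub>E (UNIV::nat set)" using g Msub by auto
  have "0 < pmf (Pi_geometric B q) g" using q by (simp add: pmf_Pi_geometric[OF fin gP q])
  also have "pmf (Pi_geometric B q) g = measure_pmf.prob (Pi_geometric B q) {g}"
    by (simp add: measure_pmf_single)
  also have "\<dots> \<le> geom_prob B q M"
    unfolding geom_prob_def using g by (intro measure_pmf.finite_measure_mono) auto
  finally show ?thesis .
qed

lemma geom_prob_less_one: assumes q: "q \<in> {0<..<1}" shows "geom_prob B q M < 1"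
proof -
  have zP: "zero_fun B \<in> B \<rightarrow>\<^sub>E (UNIV::nat set)" by (simp add: zero_fun_def)
  have Sz: "total B (zero_fun B) = 0" by (simp add: total_def zero_fun_def)
  have pz: "0 < pmf (Pi_geometric B q) (zero_fun B)"
    using q by (simp add: pmf_Pi_geometric[OF fin zP q] Sz)
  have "geom_prob B q M \<le> measure_pmf.prob (Pi_geometric B q) (UNIV - {zero_fun B})"
    unfolding geom_prob_def using zero by (intro measure_pmf.finite_measure_mono) auto
  also have "\<dots> = 1 - pmf (Pi_geometric B q) (zero_fun B)"
    using measure_pmf.prob_compl[of "{zero_fun B}" "Pi_geometric B q"]
    by (simp add: measure_pmf_single)
  finally show ?thesis using pz by simp
qed

lemma geom_prob_bounds: "q \<in> {0<..<1} \<Longrightarrow> 0 < geom_prob B q M \<and> geom_prob B q M < 1"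
  using geom_prob_pos geom_prob_less_one by blast

definition ratio :: "real \<Rightarrow> real" where "ratio t = t / (real n + t)"

lemma ratio_in: "t > 0 \<Longrightarrow> ratio t \<in> {0<..<1}"
  using n_pos by (auto simp: ratio_def)

lemma nu_eq_Pi_geometric: "t \<ge> 0 \<Longrightarrow> nu B t = Pi_geometric B (ratio t)"
proof -
  assume t: "t \<ge> 0"
  have "1 / (1 + t / real n) = 1 - ratio t"
    using n_pos t by (simp add: ratio_def field_simps)
  thus ?thesis by (simp add: nu_def Pi_geometric_def)
qed

definition nu_prob :: "real \<Rightarrow> real" where "nu_prob t = measure_pmf.prob (nu B t) M"

lemma nu_prob_eq_geom_prob: "t \<ge> 0 \<Longrightarrow> nu_prob t = geom_prob B (ratio t) M"
  by (simp add: nu_prob_def geom_prob_def nu_eq_Pi_geometric)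

lemma nu_prob_bounds: "t > 0 \<Longrightarrow> 0 < nu_prob t \<and> nu_prob t < 1"
  using geom_prob_bounds[OF ratio_in] nu_prob_eq_geom_prob by simp

definition odds :: "real \<Rightarrow> real" where "odds t = nu_prob t / (1 - nu_prob t)"

lemma odds_pos: "t > 0 \<Longrightarrow> odds t > 0" using nu_prob_bounds[of t] by (simp add: odds_def)

lemma odds_scale_le:
  assumes "0 < t1" "t1 \<le> t2"
  shows "(t2/t1) * odds t1 \<le> odds t2"
proof -
  have odds_ratio: "(1 - ratio t)/ratio t = real n / t" if "t > 0" for t
  proof -
    have "1 - ratio t = real n / (real n + t)" using that n_pos by (simp add: ratio_def field_simps)
    thus ?thesis using that n_pos by (simp add: ratio_def)
  qed
  have "0 < ratio t1" "ratio t1 \<le> ratio t2" "ratio t2 < 1"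
    using ratio_in[of t1] ratio_in[of t2] assms n_pos by (auto simp: ratio_def frac_le field_simps)
  from geom_odds_mono[OF fin n_pos up geom_prob_bounds this]
  have "odds t1 * (real n / t1) \<le> odds t2 * (real n / t2)"
    using assms by (simp add: odds_def odds_ratio nu_prob_eq_geom_prob)
  hence "(odds t1 * (real n / t1)) * (t2 / real n) \<le> (odds t2 * (real n / t2)) * (t2 / real n)"
    using assms n_pos by (intro mult_right_mono) auto
  thus ?thesis using assms n_pos by (simp add: field_simps)
qed

lemma odds_ge_1_iff: "t > 0 \<Longrightarrow> odds t \<ge> 1 \<longleftrightarrow> nu_prob t \<ge> 1/2"
  using nu_prob_bounds[of t] by (simp add: odds_def field_simps)

lemma odds_le_1_iff: "t > 0 \<Longrightarrow> odds t \<le> 1 \<longleftrightarrow> nu_prob t \<le> 1/2"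
  using nu_prob_bounds[of t] by (simp add: odds_def field_simps)

lemma odds_eq_1_iff: "t > 0 \<Longrightarrow> odds t = 1 \<longleftrightarrow> nu_prob t = 1/2"
proof -
  assume t: "t > 0"
  show ?thesis using odds_ge_1_iff[OF t] odds_le_1_iff[OF t] by (auto simp del: odds_def)
qed

lemma isCont_geom_prob_ext_ratio:
  assumes "t > 0" shows "isCont (\<lambda>t. geom_prob_ext B M (ratio t)) t"
proof -
  have q: "ratio t \<in> {0<..<1}" by (rule ratio_in[OF assms])
  have "isCont (geom_prob_ext B M) (ratio t)"
    using geom_prob_ext_has_derivative[OF fin q] by (rule DERIV_isCont)
  moreover have "isCont ratio t" unfolding ratio_def[abs_def] using assms n_pos
    by (intro continuous_intros) auto
  ultimately show ?thesis by (rule isCont_o2[rotated])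
qed

lemma nu_prob_eq_geom_prob_ext: "t > 0 \<Longrightarrow> nu_prob t = geom_prob_ext B M (ratio t)"
  using nu_prob_eq_geom_prob[of t] geom_prob_ext_eq[OF fin ratio_in[of t]] by simp

lemma ex_nu_prob_half: "\<exists>t>0. nu_prob t = 1/2"
proof -
  define c where "c = odds 1"
  have c: "c > 0" using odds_pos[of 1] by (simp add: c_def)
  define t1 where "t1 = min 1 (1/c)"
  define t2 where "t2 = max 1 (1/c)"
  have t1: "0 < t1" "t1 \<le> 1" using c by (auto simp: t1_def)
  have t2: "1 \<le> t2" "1/c \<le> t2" by (auto simp: t2_def)
  have "(1/t1) * odds t1 \<le> c" using odds_scale_le[OF t1] by (simp add: c_def)
  hence "odds t1 \<le> t1 * c" using t1 by (simp add: field_simps)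
  also have "t1 * c \<le> 1" using c by (auto simp: t1_def min_def field_simps)
  finally have a: "nu_prob t1 \<le> 1/2" using odds_le_1_iff[OF t1(1)] by simp
  have "t2 * c \<le> odds t2" using odds_scale_le[of 1 t2] t2 by (simp add: c_def)
  moreover have "1 \<le> t2 * c" using t2 c by (simp add: field_simps)
  ultimately have b: "1/2 \<le> nu_prob t2" using odds_ge_1_iff[of t2] t2 by simp
  have t12: "t1 \<le> t2" using t1 t2 by simp
  have "\<exists>x\<ge>t1. x \<le> t2 \<and> geom_prob_ext B M (ratio x) = 1/2"
  proof (rule IVT)
    show "geom_prob_ext B M (ratio t1) \<le> 1/2" using a nu_prob_eq_geom_prob_ext t1 by simp
    show "1/2 \<le> geom_prob_ext B M (ratio t2)" using b nu_prob_eq_geom_prob_ext t2 by simp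
    show "t1 \<le> t2" by (rule t12)
    show "\<forall>x. t1 \<le> x \<and> x \<le> t2 \<longrightarrow> isCont (\<lambda>t. geom_prob_ext B M (ratio t)) x"
      using isCont_geom_prob_ext_ratio t1 by auto
  qed
  then obtain x where "x \<ge> t1" "geom_prob_ext B M (ratio x) = 1/2" by blast
  thus ?thesis using t1 nu_prob_eq_geom_prob_ext[of x] by (intro exI[of _ x]) auto
qed

lemma nu_prob_half_unique:
  assumes "t > 0" "t' > 0" "nu_prob t = 1/2" "nu_prob t' = 1/2"
  shows "t = t'"
proof (rule ccontr)
  assume "t \<noteq> t'"
  hence "t < t' \<or> t' < t" by auto
  moreover have "odds t = 1" "odds t' = 1" using odds_eq_1_iff assms by auto
  ultimately show False
    using odds_scale_le[of t t'] odds_scale_le[of t' t] assms by (auto simp: field_simps)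
qed

lemma geometric_threshold_pos: "geometric_threshold B M > 0"
  and nu_prob_geometric_threshold: "nu_prob (geometric_threshold B M) = 1/2"
proof -
  have ex: "\<exists>!T. T > 0 \<and> measure_pmf.prob (nu B T) M = 1/2"
    using ex_nu_prob_half nu_prob_half_unique unfolding nu_prob_def by blast
  have "geometric_threshold B M > 0 \<and> measure_pmf.prob (nu B (geometric_threshold B M)) M = 1/2"
    unfolding geometric_threshold_def by (rule theI'[OF ex])
  thus "geometric_threshold B M > 0" "nu_prob (geometric_threshold B M) = 1/2"
    by (auto simp: nu_prob_def)
qed

end

section \<open>Monotonicity of the uniform measures\<close>

lemma sum_fun_upd_Suc:
  assumes "finite B" "b \<in> B"
  shows "(\<Sum>c\<in>B. (f(b := Suc (f b))) c) = Suc (\<Sum>c\<in>B. f c)"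
proof -
  have "(\<Sum>c\<in>B. (f(b := Suc (f b))) c) = (f(b := Suc (f b))) b + (\<Sum>c\<in>B-{b}. (f(b := Suc (f b))) c)"
    using assms by (rule sum.remove)
  also have "(\<Sum>c\<in>B-{b}. (f(b := Suc (f b))) c) = (\<Sum>c\<in>B-{b}. f c)" by (intro sum.cong) auto
  also have "(\<Sum>c\<in>B. f c) = f b + (\<Sum>c\<in>B-{b}. f c)" using assms by (rule sum.remove)
  ultimately show ?thesis by simp
qed

text \<open>Double counting: \<open>(f, b) \<mapsto> (f(b := Suc (f b)), b)\<close> maps \<open>(M \<inter> level B s) \<times> B\<close>
  injectively into \<open>(M \<inter> level B (Suc s)) \<times> B\<close>. Weighting a pair by the \<open>b\<close>-coordinate of its
  image gives total weight \<open>s + card B\<close> per \<open>f\<close> on the left and \<open>Suc s\<close> per \<open>g\<close> on the right.\<close>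

lemma upper_level_count_growth:
  assumes fin: "finite B" and up: "upper_set B M"
  shows "(s + card B) * card (M \<inter> level B s) \<le> Suc s * card (M \<inter> level B (Suc s))"
proof -
  define X where "X = (M \<inter> level B s) \<times> B"
  define Y where "Y = (M \<inter> level B (Suc s)) \<times> B"
  define \<phi> where "\<phi> = (\<lambda>(f::'a \<Rightarrow> nat, b). (f(b := Suc (f b)), b))"
  have finX: "finite X" and finY: "finite Y"
    using level_finite[OF fin] fin by (auto simp: X_def Y_def)
  have inj: "inj_on \<phi> X"
  proof (rule inj_onI)
    fix x y assume "x \<in> X" "y \<in> X" "\<phi> x = \<phi> y"
    then obtain f b f' b' where x: "x = (f,b)" and y: "y = (f',b')" and
      e: "f(b := Suc (f b)) = f'(b' := Suc (f' b'))" "b = b'"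
      by (cases x, cases y) (auto simp: \<phi>_def)
    have "f b = f' b" using fun_cong[OF e(1), of b] e(2) by simp
    hence "f = f'" using e by (auto simp: fun_eq_iff split: if_splits)
    thus "x = y" using x y e(2) by simp
  qed
  have sub: "\<phi> ` X \<subseteq> Y"
  proof
    fix y assume "y \<in> \<phi> ` X"
    then obtain f b where fb: "f \<in> M" "f \<in> level B s" "b \<in> B" and y: "y = (f(b := Suc (f b)), b)"
      by (auto simp: X_def \<phi>_def)
    have fP: "f \<in> B \<rightarrow>\<^sub>E (UNIV::nat set)" using fb by (simp add: level_def)
    have gP: "f(b := Suc (f b)) \<in> B \<rightarrow>\<^sub>E (UNIV::nat set)"
      using fP fb(3) by (auto simp: PiE_iff extensional_def)
    have "f(b := Suc (f b)) \<in> M" using up fb(1) gP unfolding upper_set_def by auto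
    moreover have "f(b := Suc (f b)) \<in> level B (Suc s)"
      using gP fb(2) sum_fun_upd_Suc[OF fin fb(3), of f] by (simp add: level_def)
    ultimately show "y \<in> Y" using y fb(3) by (simp add: Y_def)
  qed
  have "(s + card B) * card (M \<inter> level B s) = (\<Sum>f\<in>M \<inter> level B s. \<Sum>b\<in>B. Suc (f b))"
  proof -
    have "(\<Sum>b\<in>B. Suc (f b)) = s + card B" if "f \<in> level B s" for f
    proof -
      have "(\<Sum>b\<in>B. Suc (f b)) = (\<Sum>b\<in>B. f b + 1)" by simp
      also have "\<dots> = (\<Sum>b\<in>B. f b) + (\<Sum>b\<in>B. 1)" by (rule sum.distrib)
      also have "(\<Sum>b\<in>B. (1::nat)) = card B" by simp
      finally show ?thesis using that by (simp add: level_def)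
    qed
    thus ?thesis by (simp add: mult.commute)
  qed
  also have "\<dots> = (\<Sum>x\<in>X. case x of (f,b) \<Rightarrow> Suc (f b))"
    unfolding X_def by (simp add: sum.cartesian_product)
  also have "\<dots> = (\<Sum>x\<in>X. (\<lambda>(g,b). g b) (\<phi> x))"
    by (intro sum.cong) (auto simp: \<phi>_def)
  also have "\<dots> = (\<Sum>y\<in>\<phi> ` X. (\<lambda>(g,b). g b) y)"
    by (simp add: sum.reindex[OF inj] o_def)
  also have "\<dots> \<le> (\<Sum>y\<in>Y. (\<lambda>(g,b). g b) y)"
    by (rule sum_mono2[OF finY sub]) auto
  also have "\<dots> = (\<Sum>g\<in>M \<inter> level B (Suc s). \<Sum>b\<in>B. g b)"
    unfolding Y_def by (simp add: sum.cartesian_product)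
  also have "\<dots> = Suc s * card (M \<inter> level B (Suc s))"
    by (simp add: level_def)
  finally show ?thesis .
qed

lemma prob_Pi_geometric_level:
  assumes fin: "finite B"
  shows "measure_pmf.prob (Pi_geometric B q) (level B s)
      = measure_pmf.prob (Pi_geometric B q) {f. total B f = s}"
proof (rule measure_pmf.finite_measure_eq_AE)
  show "AE x in Pi_geometric B q. (x \<in> level B s) = (x \<in> {f. total B f = s})"
    by (subst AE_measure_pmf_iff)
       (auto dest!: set_pmf_Pi_geometric[OF fin] simp: level_def total_def)
qed auto

text \<open>All points of a level are equally likely under \<open>Pi_geometric\<close>, so their number can be read
  off from the negative binomial distribution of the total.\<close>

lemma card_level:
  assumes fin: "finite B"
  shows "card (level B s) = (s + card B - 1) choose s"
proof -
  define q :: real where "q = 1/2"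
  have q: "q \<in> {0<..<1}" by (simp add: q_def)
  have qne: "q \<noteq> 0" "q \<noteq> 1" by (auto simp: q_def)
  have "measure_pmf.prob (Pi_geometric B q) (level B s)
      = real (card (level B s)) * ((1-q)^card B * q^s)"
    using prob_Pi_geometric_level_subset[OF fin q, of UNIV s] by (simp add: level_count_def)
  moreover have "measure_pmf.prob (Pi_geometric B q) (level B s)
      = real ((s + card B - 1) choose s) * ((1-q)^card B * q^s)"
  proof -
    have "measure_pmf.prob (Pi_geometric B q) {f. total B f = s}
        = measure_pmf.prob (map_pmf (total B) (Pi_geometric B q)) {s}"
      by (simp add: vimage_def)
    also have "\<dots> = pmf (neg_binomial_pmf (card B) (1-q)) s"
      by (simp add: map_total_Pi_geometric[OF fin] measure_pmf_single)
    also have "\<dots> = real ((s + card B - 1) choose s) * ((1-q)^card B * q^s)"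
      using q by (subst pmf_neg_binomial) (auto simp: mult_ac)
    finally show ?thesis by (simp add: prob_Pi_geometric_level[OF fin])
  qed
  ultimately have e: "real (card (level B s)) * ((1-q)^card B * q^s)
      = real ((s + card B - 1) choose s) * ((1-q)^card B * q^s)"
    by (rule trans[OF sym])
  have "(1-q)^card B * q^s \<noteq> 0" using qne by simp
  hence "real (card (level B s)) = real ((s + card B - 1) choose s)"
    using e by (metis mult_right_cancel)
  thus ?thesis by (simp only: of_nat_eq_iff)
qed

lemma level_nonempty:
  assumes "finite B" "B \<noteq> {}"
  shows "level B s \<noteq> {}"
proof -
  have "card B > 0" using assms by (simp add: card_gt_0_iff)
  hence "0 < (s + card B - 1) choose s" by (simp add: zero_less_binomial_iff)
  hence "card (level B s) > 0" using assms(1) by (simp add: card_level)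
  thus ?thesis by auto
qed

lemma card_level_Suc:
  assumes "finite B" "B \<noteq> {}"
  shows "Suc s * card (level B (Suc s)) = (s + card B) * card (level B s)"
proof -
  obtain m where m: "card B = Suc m" using assms by (cases "card B") auto
  have "Suc (s + m) * ((s + m) choose s) = (Suc (s + m) choose Suc s) * Suc s"
    by (rule Suc_times_binomial_eq)
  thus ?thesis using assms(1) by (simp add: card_level m mult.commute)
qed

context nontrivial_upper_set
begin

definition unif_prob :: "nat \<Rightarrow> real" where "unif_prob s = measure_pmf.prob (mu B s) M"

lemma unif_prob_eq: "unif_prob s = real (card (M \<inter> level B s)) / real (card (level B s))"
proof -
  have "unif_prob s = real (card (level B s \<inter> M)) / real (card (level B s))"
    unfolding unif_prob_def mu_def using level_nonempty[OF fin ne] level_finite[OF fin]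
    by (subst measure_pmf_of_set) auto
  thus ?thesis by (simp add: Int_commute)
qed

lemma unif_prob_bounds: "0 \<le> unif_prob s" "unif_prob s \<le> 1" by (auto simp: unif_prob_def)

lemma unif_prob_Suc: "unif_prob s \<le> unif_prob (Suc s)"
proof -
  define Ns where "Ns = real (card (M \<inter> level B s))"
  define Ns' where "Ns' = real (card (M \<inter> level B (Suc s)))"
  define Ls where "Ls = real (card (level B s))"
  define Ls' where "Ls' = real (card (level B (Suc s)))"
  have Lpos: "Ls > 0" "Ls' > 0"
    using level_nonempty[OF fin ne] level_finite[OF fin]
    by (auto simp: Ls_def Ls'_def card_gt_0_iff)
  have dc: "(real s + real n) * Ns \<le> (real s + 1) * Ns'"
    using upper_level_count_growth[OF fin up, of s] unfolding Ns_def Ns'_def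
    by (metis of_nat_add of_nat_le_iff of_nat_mult of_nat_Suc add.commute)
  have cl: "(real s + 1) * Ls' = (real s + real n) * Ls"
    using card_level_Suc[OF fin ne, of s] unfolding Ls_def Ls'_def
    by (metis of_nat_add of_nat_mult of_nat_Suc add.commute)
  have "Ns / Ls = ((real s + real n) * Ns) / ((real s + real n) * Ls)" using n_pos by simp
  also have "\<dots> \<le> ((real s + 1) * Ns') / ((real s + real n) * Ls)"
    using Lpos n_pos dc by (intro divide_right_mono) auto
  also have "\<dots> = ((real s + 1) * Ns') / ((real s + 1) * Ls')" by (simp add: cl)
  also have "\<dots> = Ns' / Ls'" by simp
  finally show ?thesis by (simp add: unif_prob_eq Ns_def Ns'_def Ls_def Ls'_def)
qed

lemma unif_prob_mono: "s \<le> s' \<Longrightarrow> unif_prob s \<le> unif_prob s'"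
  by (induction s' rule: dec_induct) (auto intro: order_trans unif_prob_Suc)

end

section \<open>Comparing the geometric and the uniform measures\<close>

context nontrivial_upper_set
begin

lemma level_count_eq_unif_prob: "level_count B M r = unif_prob r * real (card (level B r))"
proof -
  have "real (card (level B r)) > 0"
    using level_nonempty[OF fin ne] level_finite[OF fin] by (auto simp: card_gt_0_iff)
  thus ?thesis by (simp add: unif_prob_eq level_count_def)
qed

lemma level_count_le_card: "level_count B M r \<le> real (card (level B r))"
  using unif_prob_bounds level_count_eq_unif_prob by (simp add: mult_left_le_one_le)

text \<open>Both bounds compare the level expansions \<open>geom_prob_sums\<close> term by term, using
  \<open>level_count_eq_unif_prob\<close> and the monotonicity of \<open>unif_prob\<close>.\<close>

lemma unif_prob_times_geom_prob_le:
  assumes q: "q \<in> {0<..<1}"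
  shows "unif_prob s * geom_prob B q {f. s \<le> total B f} \<le> geom_prob B q M"
proof -
  define w where "w r = (1-q)^n * q^r" for r
  have w: "w r \<ge> 0" for r using q by (simp add: w_def)
  have "unif_prob s * level_count B {f. s \<le> total B f} r \<le> level_count B M r" for r
    using unif_prob_mono[of s r] unif_prob_bounds
    by (auto simp: level_count_total_ge level_count_eq_unif_prob intro: mult_right_mono)
  hence "unif_prob s * (level_count B {f. s \<le> total B f} r * w r) \<le> level_count B M r * w r" for r
    using w by (metis mult.assoc mult_right_mono)
  moreover have "(\<lambda>r. unif_prob s * (level_count B {f. s \<le> total B f} r * w r))
      sums (unif_prob s * geom_prob B q {f. s \<le> total B f})"
    unfolding w_def by (intro sums_mult geom_prob_sums[OF fin q])
  moreover have "(\<lambda>r. level_count B M r * w r) sums geom_prob B q M"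
    unfolding w_def by (rule geom_prob_sums[OF fin q])
  ultimately show ?thesis by (rule sums_le)
qed

lemma geom_prob_le_unif_prob_add:
  assumes q: "q \<in> {0<..<1}"
  shows "geom_prob B q M \<le> unif_prob s + geom_prob B q {f. s < total B f}"
proof -
  define w where "w r = (1-q)^n * q^r" for r
  have w: "w r \<ge> 0" for r using q by (simp add: w_def)
  have "level_count B M r \<le> unif_prob s * level_count B UNIV r + level_count B {f. s
      < total B f} r" for r
  proof (cases "r \<le> s")
    case True
    thus ?thesis using unif_prob_mono[OF True]
      by (auto simp: level_count_total_gt level_count_eq_unif_prob level_count_UNIV
          intro: mult_right_mono)
  next
    case False
    have "unif_prob s * real (card (level B r)) \<ge> 0" using unif_prob_bounds(1)[of s] by simp
    thus ?thesis using False level_count_le_card[of r]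
      by (auto simp: level_count_total_gt level_count_UNIV)
  qed
  hence "level_count B M r * w r
      \<le> unif_prob s * (level_count B UNIV r * w r) + level_count B {f. s < total B f} r * w r" for r
    using mult_right_mono[OF _ w] by (metis distrib_right mult.assoc)
  moreover have "(\<lambda>r. level_count B M r * w r) sums geom_prob B q M"
    unfolding w_def by (rule geom_prob_sums[OF fin q])
  moreover have "(\<lambda>r. unif_prob s * (level_count B UNIV r * w r) + level_count B {f. s < total B f} r * w r)
      sums (unif_prob s + geom_prob B q {f. s < total B f})"
    using sums_add[OF sums_mult[OF geom_prob_sums[OF fin q, of UNIV]] geom_prob_sums[OF fin q]]
    by (simp add: w_def geom_prob_UNIV)
  ultimately show ?thesis by (rule sums_le)
qed

lemma geom_prob_total_deviation_le:
  assumes t: "t > 0" and d: "d > 0"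
  shows "geom_prob B (ratio t) {f. d \<le> \<bar>real (total B f) - t\<bar>} \<le> t * (1 + t / real n) / d^2"
proof -
  let ?q = "ratio t"
  have p: "1 - ?q \<in> {0<..1}" using ratio_in[OF t] by auto
  have nt: "real n + t > 0" "real n > 0" using t n_pos by auto
  have qe: "ratio t = t / (real n + t)" "1 - ratio t = real n / (real n + t)"
    using nt by (auto simp: ratio_def field_simps)
  have d1: "t * real n + real n * real n > 0"
    "t * (real n * real n) + real n * (real n * real n) > 0"
    using nt t by (auto intro!: add_pos_pos mult_pos_pos)
  have mu: "real n * ratio t / (1 - ratio t) = t"
    unfolding qe using nt d1 by (simp add: field_simps)
  have var: "real n * ratio t / (1 - ratio t)^2 = t * (1 + t / real n)"
    unfolding qe using nt d1 by (simp add: field_simps power2_eq_square)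
  have "geom_prob B ?q {f. d \<le> \<bar>real (total B f) - t\<bar>}
      = measure_pmf.prob (map_pmf (total B) (Pi_geometric B ?q)) {x. d \<le> \<bar>real x - t\<bar>}"
    by (simp add: geom_prob_def vimage_def)
  also have "\<dots> = measure_pmf.prob (neg_binomial_pmf n (1 - ?q)) {x. d
      \<le> \<bar>real x - real n * (1 - (1 - ?q)) / (1 - ?q)\<bar>}"
    by (simp add: map_total_Pi_geometric[OF fin] mu)
  also have "\<dots> \<le> (real n * (1 - (1 - ?q)) / (1 - ?q)^2) / d^2"
    by (rule prob_neg_binomial_pmf_abs_ge_Chebyshev[OF p d])
  also have "real n * (1 - (1 - ?q)) / (1 - ?q)^2 = t * (1 + t / real n)" using var by simp
  finally show ?thesis .
qed

end

section \<open>Comparing the thresholds\<close>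

context nontrivial_upper_set
begin

abbreviation "T' \<equiv> geometric_threshold B M"

lemma nu_prob_ge_above_threshold:
  assumes "T' \<le> t"
  shows "t / (t + T') \<le> nu_prob t"
proof -
  have T': "T' > 0" by (rule geometric_threshold_pos)
  have "odds T' = 1" using odds_eq_1_iff[OF T'] nu_prob_geometric_threshold by simp
  hence "t / T' \<le> odds t" using odds_scale_le[OF T' assms] by simp
  thus ?thesis using nu_prob_bounds[of t] T' assms by (simp add: odds_def field_simps)
qed

lemma nu_prob_le_below_threshold:
  assumes "0 < t" "t \<le> T'"
  shows "nu_prob t \<le> t / (t + T')"
proof -
  have T': "T' > 0" by (rule geometric_threshold_pos)
  have "odds T' = 1" using odds_eq_1_iff[OF T'] nu_prob_geometric_threshold by simp
  hence "(T' / t) * odds t \<le> 1" using odds_scale_le[OF assms] by simp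
  thus ?thesis using nu_prob_bounds[of t] T' assms by (simp add: odds_def field_simps)
qed

lemma geom_prob_total_greater_le:
  assumes t: "t > 0" and e: "\<epsilon> > 0" and s: "(1+\<epsilon>) * t \<le> real s"
  shows "geom_prob B (ratio t) {f. s < total B f} \<le> (1 / t + 1 / real n) / \<epsilon>^2"
proof -
  have "{f. s < total B f} \<subseteq> {f. \<epsilon> * t \<le> \<bar>real (total B f) - t\<bar>}"
    using s by (auto simp: algebra_simps)
  hence "geom_prob B (ratio t) {f. s < total B f}
      \<le> geom_prob B (ratio t) {f. \<epsilon> * t \<le> \<bar>real (total B f) - t\<bar>}"
    unfolding geom_prob_def by (rule measure_pmf.finite_measure_mono) auto
  also have "\<dots> \<le> t * (1 + t / real n) / (\<epsilon> * t)^2"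
    using geom_prob_total_deviation_le[OF t] e t by simp
  also have "\<dots> = (1 / t + 1 / real n) / \<epsilon>^2"
    using t e n_pos by (simp add: field_simps power2_eq_square)
  finally show ?thesis .
qed

lemma geom_prob_total_less_le:
  assumes t: "t > 0" and e: "\<epsilon> > 0" and s: "real s \<le> t / (1+\<epsilon>)"
  shows "geom_prob B (ratio t) {f. total B f < s} \<le> (1 / t + 1 / real n) * (1+\<epsilon>)^2 / \<epsilon>^2"
proof -
  define d where "d = t * \<epsilon> / (1+\<epsilon>)"
  have d: "d > 0" using t e by (simp add: d_def)
  have "t / (1+\<epsilon>) = t - d" using e by (simp add: d_def field_simps)
  hence "{f. total B f < s} \<subseteq> {f. d \<le> \<bar>real (total B f) - t\<bar>}"
    using s by auto
  hence "geom_prob B (ratio t) {f. total B f < s}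
      \<le> geom_prob B (ratio t) {f. d \<le> \<bar>real (total B f) - t\<bar>}"
    unfolding geom_prob_def by (rule measure_pmf.finite_measure_mono) auto
  also have "\<dots> \<le> t * (1 + t / real n) / d^2" by (rule geom_prob_total_deviation_le[OF t d])
  also have "\<dots> = (1 / t + 1 / real n) * (1+\<epsilon>)^2 / \<epsilon>^2"
    using t e n_pos by (simp add: d_def field_simps power2_eq_square)
  finally show ?thesis .
qed

lemma uniform_threshold_eq_Least: "uniform_threshold B M = (LEAST T. 1/2 \<le> unif_prob T)"
  by (simp add: uniform_threshold_def unif_prob_def)

text \<open>Above \<open>(1 + \<epsilon>)\<^sup>2 T'\<close>: at \<open>t = (1 + \<epsilon>) T'\<close> the geometric measure exceeds \<open>1/2\<close> by a
  margin, and almost all of it comes from levels below \<open>(1 + \<epsilon>) t\<close>.\<close>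

lemma uniform_threshold_le:
  assumes e: "0 < \<epsilon>" "\<epsilon> \<le> 1"
    and small: "(1 / ((1+\<epsilon>)*T') + 1 / real n) / \<epsilon>^2 \<le> \<epsilon> / (2*(2+\<epsilon>))"
  shows "real (uniform_threshold B M) \<le> (1+\<epsilon>)^2 * T' + 1"
    and "1/2 \<le> unif_prob (uniform_threshold B M)"
proof -
  define t where "t = (1+\<epsilon>) * T'"
  define s where "s = nat \<lceil>(1+\<epsilon>) * t\<rceil>"
  have T': "T' > 0" by (rule geometric_threshold_pos)
  have t: "t > 0" "T' \<le> t" using T' e by (simp_all add: t_def)
  have "(1+\<epsilon>)/(2+\<epsilon>) = ((1+\<epsilon>)*T') / ((2+\<epsilon>)*T')" using T' by simp
  also have "\<dots> = t / (t + T')" by (simp add: t_def algebra_simps)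
  also have "\<dots> \<le> nu_prob t" by (rule nu_prob_ge_above_threshold[OF t(2)])
  also have "\<dots> \<le> unif_prob s + geom_prob B (ratio t) {f. s < total B f}"
    using geom_prob_le_unif_prob_add[OF ratio_in[OF t(1)]] nu_prob_eq_geom_prob t by simp
  also have "geom_prob B (ratio t) {f. s < total B f} \<le> \<epsilon> / (2*(2+\<epsilon>))"
    using geom_prob_total_greater_le[OF t(1) e(1), of s] small
    by (simp add: s_def t_def real_nat_ceiling_ge)
  finally have "(1+\<epsilon>)/(2+\<epsilon>) - \<epsilon> / (2*(2+\<epsilon>)) \<le> unif_prob s" by simp
  moreover have "(1+\<epsilon>)/(2+\<epsilon>) - \<epsilon> / (2*(2+\<epsilon>)) = 1/2"
    using e by (simp add: divide_simps) (simp add: algebra_simps)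
  ultimately have half: "1/2 \<le> unif_prob s" by linarith
  show "1/2 \<le> unif_prob (uniform_threshold B M)"
    unfolding uniform_threshold_eq_Least by (rule LeastI[of "\<lambda>T. 1/2 \<le> unif_prob T", OF half])
  have "uniform_threshold B M \<le> s"
    unfolding uniform_threshold_eq_Least by (rule Least_le[of "\<lambda>T. 1/2 \<le> unif_prob T", OF half])
  moreover have "real s \<le> (1+\<epsilon>) * t + 1"
    using t e of_int_ceiling_le_add_one[of "(1+\<epsilon>) * t"] by (simp add: s_def)
  ultimately show "real (uniform_threshold B M) \<le> (1+\<epsilon>)^2 * T' + 1"
    by (simp add: t_def power2_eq_square mult.assoc)
qed

text \<open>Below \<open>T' / (1 + \<epsilon>)\<^sup>2\<close>: at \<open>t = T' / (1 + \<epsilon>)\<close> the geometric measure is below \<open>1/2\<close>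
  by a margin, and almost all of its mass sits on levels above \<open>t / (1 + \<epsilon>)\<close>.\<close>

lemma uniform_threshold_gt:
  assumes e: "0 < \<epsilon>" "\<epsilon> \<le> 1"
    and small: "(1 / (T' / (1+\<epsilon>)) + 1 / real n) * (1+\<epsilon>)^2 / \<epsilon>^2 \<le> \<epsilon> / (2*(2+\<epsilon>))"
    and ex: "\<exists>T. 1/2 \<le> unif_prob T"
  shows "T' / (1+\<epsilon>)^2 < real (uniform_threshold B M)"
proof -
  define t where "t = T' / (1+\<epsilon>)"
  define s where "s = nat \<lfloor>t / (1+\<epsilon>)\<rfloor>"
  define \<delta> where "\<delta> = \<epsilon> / (2*(2+\<epsilon>))"
  have T': "T' > 0" by (rule geometric_threshold_pos)
  have t: "t > 0" "t \<le> T'" using T' e by (simp_all add: t_def field_simps)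
  have s: "real s \<le> t / (1+\<epsilon>)" "t / (1+\<epsilon>) < real s + 1"
    using t e by (simp_all add: s_def)
  have "geom_prob B (ratio t) {f. total B f < s} \<le> \<delta>"
    using geom_prob_total_less_le[OF t(1) e(1) s(1)] small by (simp add: t_def \<delta>_def)
  moreover have "{f. s \<le> total B f} = - {f. total B f < s}" by auto
  hence "geom_prob B (ratio t) {f. s \<le> total B f} = 1 - geom_prob B (ratio t) {f. total B f < s}"
    using measure_pmf.prob_compl[of "{f. total B f < s}" "Pi_geometric B (ratio t)"]
    by (simp add: geom_prob_def Compl_eq_Diff_UNIV)
  ultimately have "unif_prob s * (1 - \<delta>) \<le> unif_prob s * geom_prob B (ratio t) {f. s \<le> total B f}"
    using unif_prob_bounds by (intro mult_left_mono) auto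
  also have "\<dots> \<le> nu_prob t"
    using unif_prob_times_geom_prob_le[OF ratio_in[OF t(1)]] nu_prob_eq_geom_prob t by simp
  also have "\<dots> \<le> t / (t + T')" by (rule nu_prob_le_below_threshold[OF t])
  also have "\<dots> = t / ((2+\<epsilon>) * t)"
  proof -
    have "T' = (1+\<epsilon>) * t" using e by (simp add: t_def)
    thus ?thesis by (simp add: algebra_simps)
  qed
  also have "\<dots> = 1/(2+\<epsilon>)" using t by simp
  also have "\<dots> < (1/2) * (1 - \<delta>)"
  proof -
    have "0 < \<epsilon> * \<epsilon> + \<epsilon> * 2" using e by (simp add: add_pos_pos)
    thus ?thesis using e by (simp add: \<delta>_def field_simps)
  qed
  finally have "unif_prob s * (1 - \<delta>) < (1/2) * (1 - \<delta>)" .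
  moreover have "0 < 1 - \<delta>" using e by (simp add: \<delta>_def field_simps)
  ultimately have "unif_prob s < 1/2" by (simp add: mult_less_cancel_right)
  hence "s < uniform_threshold B M"
    using unif_prob_mono LeastI_ex[OF ex] unfolding uniform_threshold_eq_Least
    by (metis not_le order.trans)
  thus ?thesis using s by (simp add: t_def power2_eq_square)
qed

end

lemma abs_ratio_sub_one_le:
  fixes T T' \<epsilon> :: real
  assumes e: "0 < \<epsilon>" "\<epsilon> \<le> 1" and T': "T' > 0" "1 / T' \<le> \<epsilon>"
    and up: "T \<le> (1+\<epsilon>)^2 * T' + 1" and lo: "T' / (1+\<epsilon>)^2 < T"
  shows "\<bar>T / T' - 1\<bar> \<le> 4 * \<epsilon>"
proof -
  have "T / T' \<le> ((1+\<epsilon>)^2 * T' + 1) / T'" using up T' by (intro divide_right_mono) auto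
  also have "\<dots> = (1+\<epsilon>)^2 + 1 / T'" using T' by (simp add: field_simps)
  also have "\<dots> \<le> 1 + 4 * \<epsilon>"
  proof -
    have "\<epsilon> * \<epsilon> \<le> \<epsilon>" using e by (simp add: mult_left_le)
    moreover have "(1+\<epsilon>)^2 + 1 / T' = 1 + 2*\<epsilon> + \<epsilon>*\<epsilon> + 1/T'"
      by (simp add: power2_eq_square algebra_simps)
    ultimately show ?thesis using T'(2) by linarith
  qed
  finally have u: "T / T' \<le> 1 + 4 * \<epsilon>" .
  have "1 - 2 * \<epsilon> \<le> 1 / (1+\<epsilon>)^2"
  proof -
    have "(1 - 2 * \<epsilon>) * (1+\<epsilon>)^2 \<le> 1"
      using e by (simp add: power2_eq_square algebra_simps)
    thus ?thesis using e by (simp add: field_simps)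
  qed
  also have "1 / (1+\<epsilon>)^2 = (T' / (1+\<epsilon>)^2) / T'" using T' by simp
  also have "\<dots> < T / T'" using lo T' by (intro divide_strict_right_mono) auto
  finally have l: "1 - 2 * \<epsilon> < T / T'" .
  show ?thesis using u l e by auto
qed

lemma threshold_error_terms_le:
  fixes \<epsilon> T' N :: real
  assumes e: "0 < \<epsilon>" "\<epsilon> \<le> 1" and T': "T' > 0" and N: "N > 0"
    and a: "1 / T' \<le> \<epsilon>^3/72" and b: "1 / N \<le> \<epsilon>^3/72"
  shows "(1 / ((1+\<epsilon>)*T') + 1 / N) / \<epsilon>^2 \<le> \<epsilon> / (2*(2+\<epsilon>))"
    and "(1 / (T' / (1+\<epsilon>)) + 1 / N) * (1+\<epsilon>)^2 / \<epsilon>^2 \<le> \<epsilon> / (2*(2+\<epsilon>))"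
    and "1 / T' \<le> \<epsilon>"
proof -
  define c where "c = \<epsilon>^3/72"
  have c: "c > 0" using e by (simp add: c_def)
  have e3: "\<epsilon>^3 \<le> \<epsilon>" using e by (simp add: power3_eq_cube mult_le_one mult_left_le)
  have key: "\<epsilon> / 6 \<le> \<epsilon> / (2*(2+\<epsilon>))" using e by (intro divide_left_mono) auto
  have ce: "c / \<epsilon>^2 = \<epsilon> / 72" using e by (simp add: c_def power2_eq_square power3_eq_cube)
  have a1: "1 / ((1+\<epsilon>)*T') \<le> c"
  proof -
    have "1 / ((1+\<epsilon>)*T') \<le> 1 / T'" using e T' by (intro divide_left_mono) (auto simp: mult_pos_pos)
    thus ?thesis using a by (simp add: c_def)
  qed
  have "(1 / ((1+\<epsilon>)*T') + 1 / N) / \<epsilon>^2 \<le> (2*c) / \<epsilon>^2"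
    using a1 b e by (intro divide_right_mono) (auto simp: c_def)
  also have "\<dots> = 2 * (c / \<epsilon>^2)" by simp
  also have "\<dots> = \<epsilon> / 36" unfolding ce by simp
  also have "\<dots> \<le> \<epsilon> / 6" using e by simp
  finally show "(1 / ((1+\<epsilon>)*T') + 1 / N) / \<epsilon>^2 \<le> \<epsilon> / (2*(2+\<epsilon>))" using key by linarith
  have a2: "1 / (T' / (1+\<epsilon>)) \<le> 2 * c"
  proof -
    have "1 / (T' / (1+\<epsilon>)) = (1+\<epsilon>) * (1 / T')" by simp
    also have "\<dots> \<le> 2 * c" using e a T' by (intro mult_mono) (auto simp: c_def)
    finally show ?thesis .
  qed
  have sq: "(1+\<epsilon>)^2 \<le> 2^2" using e by (intro power_mono) auto
  have b': "1 / N \<le> c" using b by (simp add: c_def)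
  have s3: "1 / (T' / (1+\<epsilon>)) + 1 / N \<le> 3 * c" using a2 b' by linarith
  have "(1 / (T' / (1+\<epsilon>)) + 1 / N) * (1+\<epsilon>)^2 \<le> (3 * c) * 4"
    using s3 sq c by (intro mult_mono) auto
  hence "(1 / (T' / (1+\<epsilon>)) + 1 / N) * (1+\<epsilon>)^2 / \<epsilon>^2 \<le> (3 * c) * 4 / \<epsilon>^2"
    using e by (intro divide_right_mono) auto
  also have "(3 * c) * 4 / \<epsilon>^2 = 12 * (c / \<epsilon>^2)" by simp
  also have "\<dots> = \<epsilon> / 6" unfolding ce by simp
  finally show "(1 / (T' / (1+\<epsilon>)) + 1 / N) * (1+\<epsilon>)^2 / \<epsilon>^2 \<le> \<epsilon> / (2*(2+\<epsilon>))" using key by linarith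
  have "\<epsilon>^3/72 \<le> \<epsilon>^3" using e by simp
  thus "1 / T' \<le> \<epsilon>" using a e3 by linarith
qed

lemma (in nontrivial_upper_set) uniform_threshold_ratio_close:
  assumes e: "0 < \<epsilon>" "\<epsilon> \<le> 1"
    and small: "1 / T' \<le> \<epsilon>^3/72" "1 / real n \<le> \<epsilon>^3/72"
  shows "\<bar>real (uniform_threshold B M) / T' - 1\<bar> \<le> 4 * \<epsilon>"
proof -
  have T': "T' > 0" by (rule geometric_threshold_pos)
  have n: "real n > 0" using n_pos by simp
  note error = threshold_error_terms_le[OF e T' n small]
  have up: "real (uniform_threshold B M) \<le> (1+\<epsilon>)^2 * T' + 1"
    and half: "1/2 \<le> unif_prob (uniform_threshold B M)"
    using uniform_threshold_le[OF e error(1)] by auto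
  have "T' / (1+\<epsilon>)^2 < real (uniform_threshold B M)"
    using uniform_threshold_gt[OF e error(2)] half by blast
  with up show ?thesis by (rule abs_ratio_sub_one_le[OF e T' error(3)])
qed

theorem theorem11:
  fixes B :: "nat \<Rightarrow> 'b set" and M :: "nat \<Rightarrow> ('b \<Rightarrow> nat) set"
  assumes "\<And>i. finite (B i)" and "\<And>i. B i \<noteq> {}"
    and "\<And>i. M i \<noteq> {}" and "\<And>i. M i \<subseteq> B i \<rightarrow>\<^sub>E (UNIV::nat set)"
    and "\<And>i. upper_set (B i) (M i)"
    and "\<And>i. zero_fun (B i) \<notin> M i"
    and "filterlim (\<lambda>i. card (B i)) at_top sequentially"
    and "filterlim (\<lambda>i. geometric_threshold (B i) (M i)) at_top sequentially"
  shows "(\<lambda>i. real (uniform_threshold (B i) (M i)) / geometric_threshold (B i) (M i))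
           \<longlonglongrightarrow> 1"
proof (rule tendstoI)
  fix e :: real assume "e > 0"
  define \<epsilon> where "\<epsilon> = min 1 (e/8)"
  have \<epsilon>: "0 < \<epsilon>" "\<epsilon> \<le> 1" "4 * \<epsilon> < e" using \<open>e > 0\<close> by (auto simp: \<epsilon>_def)
  have c: "0 < \<epsilon>^3/72" using \<epsilon> by simp
  have "filterlim (\<lambda>i. real (card (B i))) at_top sequentially"
    by (rule filterlim_compose[OF filterlim_real_sequentially assms(7)])
  from order_tendstoD(2)[OF tendsto_inverse_0_at_top[OF this] c]
    order_tendstoD(2)[OF tendsto_inverse_0_at_top[OF assms(8)] c]
  show "\<forall>\<^sub>F i in sequentially.
      dist (real (uniform_threshold (B i) (M i)) / geometric_threshold (B i) (M i)) 1 < e"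
  proof eventually_elim
    case (elim i)
    interpret nontrivial_upper_set "B i" "M i" by unfold_locales (use assms in auto)
    have "\<bar>real (uniform_threshold (B i) (M i)) / T' - 1\<bar> \<le> 4 * \<epsilon>"
      using elim by (intro uniform_threshold_ratio_close \<epsilon>(1,2)) (auto simp: inverse_eq_divide)
    thus ?case using \<epsilon>(3) by (simp add: dist_real_def)
  qed
qed

end
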